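(* Let $A$ be a ring and $\mathcal C$ a Frobenius-coseparable $A$-coring with cointegral $\delta$ and Frobenius element $e$. Then every right $\mathcal C$-comodule is both formally $\mathbb X^{\mathcal C}_{\delta,e}$-smooth and formally $\mathbb X^{\mathcal C}_{\delta,e}$-cosmooth.
   Context: An $A$-coring $\mathcal C$ has coproduct $\Delta_{\mathcal C}(c)=\sum c_{(1)}\otimes_A c_{(2)}$ and counit $\varepsilon_{\mathcal C}$; right comodules $M$ have coaction $\varrho^M(m)=\sum m_{(0)}\otimes_A m_{(1)}$; $\mathfrak M^{\mathcal C}$ is the category of right $\mathcal C$-comodules, $\mathfrak M_A$ that of right $A$-modules. $\mathcal C$ is coseparable with cointegral $\delta$ if $\delta:\mathcal C\otimes_A\mathcal C\to A$ is an $(A,A)$-bimodule map with $\delta\circ\Delta_{\mathcal C}=\varepsilon_{\mathcal C}$ and $(\mathcal C\otimes_A\delta)\circ(\Delta_{\mathcal C}\otimes_A\mathcal C)=(\delta\otimes_A\mathcal C)\circ(\mathcal C\otimes_A\Delta_{\mathcal C})$. $\mathcal C^A=\{c\in\mathcal C: ac=ca\ \forall a\in A\}$. A coseparable coring with cointegral $\delta$ is Frobenius-coseparable if there is $e\in\mathcal C^A$ (a Frobenius element) with $\delta(c\otimes_A e)=\delta(e\otimes_A c)=\varepsilon_{\mathcal C}(c)$ for all $c\in\mathcal C$. General definitions: an S-category is a pair of functors $u^*:\mathfrak X\to\bar{\mathfrak X}$, $u_*:\bar{\mathfrak X}\to\mathfrak X$ with $u^*\dashv u_*$ and a chosen natural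 left inverse $\nu$ of the unit $\eta$; it is supplemented by a functor $u_!:\bar{\mathfrak X}\to\mathfrak X$ and natural transformation $\bar\eta:\mathrm{Id}\to u^*u_!$; one sets $r_y=\nu_{u_!(y)}\circ u_*(\bar\eta_y):u_*(y)\to u_!(y)$. An object $x\in\mathfrak X$ is formally $\mathbb X$-smooth if $\mathfrak X(x,r_y):g\mapsto r_y\circ g$ is surjective for all $y\in\bar{\mathfrak X}$, and formally $\mathbb X$-cosmooth if $\mathfrak X(r_y,x):g\mapsto g\circ r_y$ is surjective for all $y$. $\mathbb X^{\mathcal C}_{\delta,e}$: $\mathfrak X=\mathfrak M^{\mathcal C}$, $\bar{\mathfrak X}=\mathfrak M_A$, $u^*$ the forgetful functor, $u_*=-\otimes_A\mathcal C$, $\nu_M:M\otimes_A\mathcal C\to M$, $m\otimes_A c\mapsto\sum m_{(0)}\delta(m_{(1)}\otimes_A c)$, $u_!=-\otimes_A\mathcal C$, $\bar\eta_N:N\to N\otimes_A\mathcal C$, $n\mapsto n\otimes_A e$. Thus for $N\in\mathfrak M_A$, $r_N:N\otimes_A\mathcal C\to N\otimes_A\mathcal C$, $n\otimes_A c\mapsto\sum n\otimes_A e_{(1)}\delta(e_{(2)}\otimes_A c)$. *)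

theory Defs
  imports Main
begin

text \<open>One record type for right A-modules and (A,A)-bimodules. For a structure that is
  only a right module, the field blact is ignored.\<close>

record ('a, 'm) bimod =
  bcarr :: "'m set"
  badd  :: "'m \<Rightarrow> 'm \<Rightarrow> 'm"
  bzero :: 'm
  bract :: "'m \<Rightarrow> 'a \<Rightarrow> 'm"
  blact :: "'a \<Rightarrow> 'm \<Rightarrow> 'm"

definition abgroup :: "('a, 'm, 'z) bimod_scheme \<Rightarrow> bool" where
  "abgroup M \<longleftrightarrow>
     bzero M \<in> bcarr M \<and>
     (\<forall>x\<in>bcarr M. \<forall>y\<in>bcarr M. badd M x y \<in> bcarr M) \<and>
     (\<forall>x\<in>bcarr M. \<forall>y\<in>bcarr M. \<forall>z\<in>bcarr M. badd M (badd M x y) z = badd M x (badd M y z)) \<and>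
     (\<forall>x\<in>bcarr M. \<forall>y\<in>bcarr M. badd M x y = badd M y x) \<and>
     (\<forall>x\<in>bcarr M. badd M (bzero M) x = x) \<and>
     (\<forall>x\<in>bcarr M. \<exists>y\<in>bcarr M. badd M x y = bzero M)"

definition right_module :: "('a::ring_1, 'm, 'z) bimod_scheme \<Rightarrow> bool" where
  "right_module M \<longleftrightarrow> abgroup M \<and>
     (\<forall>x\<in>bcarr M. \<forall>a. bract M x a \<in> bcarr M) \<and>
     (\<forall>x\<in>bcarr M. \<forall>y\<in>bcarr M. \<forall>a. bract M (badd M x y) a = badd M (bract M x a) (bract M y a)) \<and>
     (\<forall>x\<in>bcarr M. \<forall>a b. bract M x (a + b) = badd M (bract M x a) (bract M x b)) \<and>
     (\<forall>x\<in>bcarr M. \<forall>a b. bract M x (a * b) = bract M (bract M x a) b) \<and>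
     (\<forall>x\<in>bcarr M. bract M x 1 = x)"

definition bimodule :: "('a::ring_1, 'm, 'z) bimod_scheme \<Rightarrow> bool" where
  "bimodule M \<longleftrightarrow> right_module M \<and>
     (\<forall>x\<in>bcarr M. \<forall>a. blact M a x \<in> bcarr M) \<and>
     (\<forall>x\<in>bcarr M. \<forall>y\<in>bcarr M. \<forall>a. blact M a (badd M x y) = badd M (blact M a x) (blact M a y)) \<and>
     (\<forall>x\<in>bcarr M. \<forall>a b. blact M (a + b) x = badd M (blact M a x) (blact M b x)) \<and>
     (\<forall>x\<in>bcarr M. \<forall>a b. blact M (a * b) x = blact M a (blact M b x)) \<and>
     (\<forall>x\<in>bcarr M. blact M 1 x = x) \<and>
     (\<forall>x\<in>bcarr M. \<forall>a b. bract M (blact M a x) b = blact M a (bract M x b))"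

definition ring_bimod :: "('a::ring_1, 'a) bimod" where
  "ring_bimod = \<lparr>bcarr = UNIV, badd = (+), bzero = 0, bract = (*), blact = (*)\<rparr>"

definition rlin :: "('a, 'm, 'z) bimod_scheme \<Rightarrow> ('a, 'n, 'w) bimod_scheme \<Rightarrow> ('m \<Rightarrow> 'n) \<Rightarrow> bool" where
  "rlin M N f \<longleftrightarrow>
     (\<forall>x\<in>bcarr M. f x \<in> bcarr N) \<and>
     (\<forall>x\<in>bcarr M. \<forall>y\<in>bcarr M. f (badd M x y) = badd N (f x) (f y)) \<and>
     (\<forall>x\<in>bcarr M. \<forall>a. f (bract M x a) = bract N (f x) a)"

definition bilin :: "('a, 'm, 'z) bimod_scheme \<Rightarrow> ('a, 'n, 'w) bimod_scheme \<Rightarrow> ('m \<Rightarrow> 'n) \<Rightarrow> bool" where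
  "bilin M N f \<longleftrightarrow> rlin M N f \<and> (\<forall>x\<in>bcarr M. \<forall>a. f (blact M a x) = blact N a (f x))"

text \<open>Elements of M \<otimes>_A C are represented by lists [(m1,c1),...,(mk,ck)] standing for
  the sum of the mi \<otimes> ci; two lists are identified iff the difference of the associated
  formal Z-linear combinations of pairs lies in the subgroup of the free abelian group on
  carrier M \<times> carrier C generated by the bilinearity and A-balancedness relations.\<close>

definition ind :: "'x \<Rightarrow> 'x \<Rightarrow> int" where
  "ind q p = (if p = q then 1 else 0)"

inductive_set trel :: "('a, 'm, 'z) bimod_scheme \<Rightarrow> ('a, 'c, 'w) bimod_scheme \<Rightarrow> ('m \<times> 'c \<Rightarrow> int) set"
  for M C where
  zero: "(\<lambda>p. 0) \<in> trel M C"
| addl: "\<lbrakk>m \<in> bcarr M; m' \<in> bcarr M; c \<in> bcarr C\<rbrakk> \<Longrightarrow>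
     (\<lambda>p. ind (badd M m m', c) p - ind (m, c) p - ind (m', c) p) \<in> trel M C"
| addr: "\<lbrakk>m \<in> bcarr M; c \<in> bcarr C; c' \<in> bcarr C\<rbrakk> \<Longrightarrow>
     (\<lambda>p. ind (m, badd C c c') p - ind (m, c) p - ind (m, c') p) \<in> trel M C"
| bal: "\<lbrakk>m \<in> bcarr M; c \<in> bcarr C\<rbrakk> \<Longrightarrow>
     (\<lambda>p. ind (bract M m a, c) p - ind (m, blact C a c) p) \<in> trel M C"
| plus: "\<lbrakk>f \<in> trel M C; g \<in> trel M C\<rbrakk> \<Longrightarrow> (\<lambda>p. f p + g p) \<in> trel M C"
| uminus: "f \<in> trel M C \<Longrightarrow> (\<lambda>p. - f p) \<in> trel M C"

definition tequiv :: "('a, 'm, 'z) bimod_scheme \<Rightarrow> ('a, 'c, 'w) bimod_scheme \<Rightarrow>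
    ('m \<times> 'c) list \<Rightarrow> ('m \<times> 'c) list \<Rightarrow> bool" where
  "tequiv M C xs ys \<longleftrightarrow>
     (\<lambda>p. int (count_list xs p) - int (count_list ys p)) \<in> trel M C"

definition tclass :: "('a, 'm, 'z) bimod_scheme \<Rightarrow> ('a, 'c, 'w) bimod_scheme \<Rightarrow>
    ('m \<times> 'c) list \<Rightarrow> ('m \<times> 'c) list set" where
  "tclass M C xs = {ys. set ys \<subseteq> bcarr M \<times> bcarr C \<and> tequiv M C xs ys}"

definition trep :: "('m \<times> 'c) list set \<Rightarrow> ('m \<times> 'c) list" where
  "trep T = (SOME xs. xs \<in> T)"

definition tensor :: "('a, 'm, 'z) bimod_scheme \<Rightarrow> ('a, 'c, 'w) bimod_scheme \<Rightarrow>
    ('a, ('m \<times> 'c) list set) bimod" where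
  "tensor M C = \<lparr>
     bcarr = {tclass M C xs | xs. set xs \<subseteq> bcarr M \<times> bcarr C},
     badd = (\<lambda>X Y. tclass M C (trep X @ trep Y)),
     bzero = tclass M C [],
     bract = (\<lambda>X a. tclass M C (map (\<lambda>(m, c). (m, bract C c a)) (trep X))),
     blact = (\<lambda>a X. tclass M C (map (\<lambda>(m, c). (blact M a m, c)) (trep X)))\<rparr>"

definition tens :: "('a, 'm, 'z) bimod_scheme \<Rightarrow> ('a, 'c, 'w) bimod_scheme \<Rightarrow> 'm \<Rightarrow> 'c \<Rightarrow> ('m \<times> 'c) list set" where
  "tens M C m c = tclass M C [(m, c)]"

definition tlift :: "('a, 'm, 'z) bimod_scheme \<Rightarrow> ('a, 'c, 'w) bimod_scheme \<Rightarrow> ('a, 'x, 'v) bimod_scheme \<Rightarrow>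
    ('m \<Rightarrow> 'c \<Rightarrow> 'x) \<Rightarrow> ('m \<times> 'c) list set \<Rightarrow> 'x" where
  "tlift M C X \<beta> T = foldr (\<lambda>(m, c) acc. badd X (\<beta> m c) acc) (trep T) (bzero X)"

definition map_tensor :: "('a, 'm, 'z) bimod_scheme \<Rightarrow> ('a, 'c, 'w) bimod_scheme \<Rightarrow> ('a, 'n, 'v) bimod_scheme \<Rightarrow>
    ('m \<Rightarrow> 'n) \<Rightarrow> ('m \<times> 'c) list set \<Rightarrow> ('n \<times> 'c) list set" where
  "map_tensor M C N f = tlift M C (tensor N C) (\<lambda>m c. tens N C (f m) c)"

text \<open>N \<otimes>_A \<Delta> : N \<otimes>_A C \<rightarrow> (N \<otimes>_A C) \<otimes>_A C, n \<otimes> c \<mapsto> sum (n \<otimes> c(1)) \<otimes> c(2)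
  (target identified with N \<otimes>_A C \<otimes>_A C via the associativity isomorphism).\<close>

definition coact_free :: "('a, 'n, 'z) bimod_scheme \<Rightarrow> ('a, 'c, 'w) bimod_scheme \<Rightarrow>
    ('c \<Rightarrow> ('c \<times> 'c) list set) \<Rightarrow> ('n \<times> 'c) list set \<Rightarrow> (('n \<times> 'c) list set \<times> 'c) list set" where
  "coact_free N C \<Delta> = tlift N C (tensor (tensor N C) C)
     (\<lambda>n c. tlift C C (tensor (tensor N C) C) (\<lambda>c1 c2. tens (tensor N C) C (tens N C n c1) c2) (\<Delta> c))"

definition coring :: "('a::ring_1, 'c, 'z) bimod_scheme \<Rightarrow> ('c \<Rightarrow> ('c \<times> 'c) list set) \<Rightarrow> ('c \<Rightarrow> 'a) \<Rightarrow> bool" where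
  "coring C \<Delta> \<epsilon> \<longleftrightarrow> bimodule C \<and>
     bilin C (tensor C C) \<Delta> \<and> bilin C ring_bimod \<epsilon> \<and>
     (\<forall>c\<in>bcarr C. map_tensor C C (tensor C C) \<Delta> (\<Delta> c) = coact_free C C \<Delta> (\<Delta> c)) \<and>
     (\<forall>c\<in>bcarr C. tlift C C C (\<lambda>x y. blact C (\<epsilon> x) y) (\<Delta> c) = c) \<and>
     (\<forall>c\<in>bcarr C. tlift C C C (\<lambda>x y. bract C x (\<epsilon> y)) (\<Delta> c) = c)"

definition comodule :: "('a::ring_1, 'c, 'z) bimod_scheme \<Rightarrow> ('c \<Rightarrow> ('c \<times> 'c) list set) \<Rightarrow> ('c \<Rightarrow> 'a) \<Rightarrow>
    ('a, 'm, 'w) bimod_scheme \<Rightarrow> ('m \<Rightarrow> ('m \<times> 'c) list set) \<Rightarrow> bool" where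
  "comodule C \<Delta> \<epsilon> M \<rho> \<longleftrightarrow> right_module M \<and> rlin M (tensor M C) \<rho> \<and>
     (\<forall>m\<in>bcarr M. map_tensor M C (tensor M C) \<rho> (\<rho> m) = coact_free M C \<Delta> (\<rho> m)) \<and>
     (\<forall>m\<in>bcarr M. tlift M C M (\<lambda>x c. bract M x (\<epsilon> c)) (\<rho> m) = m)"

definition comod_hom :: "('a, 'c, 'z) bimod_scheme \<Rightarrow>
    ('a, 'm, 'w) bimod_scheme \<Rightarrow> ('m \<Rightarrow> ('m \<times> 'c) list set) \<Rightarrow>
    ('a, 'n, 'v) bimod_scheme \<Rightarrow> ('n \<Rightarrow> ('n \<times> 'c) list set) \<Rightarrow> ('m \<Rightarrow> 'n) \<Rightarrow> bool" where
  "comod_hom C M \<rho>M N \<rho>N f \<longleftrightarrow> rlin M N f \<and>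
     (\<forall>m\<in>bcarr M. \<rho>N (f m) = map_tensor M C N f (\<rho>M m))"

definition coseparable :: "('a::ring_1, 'c, 'z) bimod_scheme \<Rightarrow> ('c \<Rightarrow> ('c \<times> 'c) list set) \<Rightarrow> ('c \<Rightarrow> 'a) \<Rightarrow>
    (('c \<times> 'c) list set \<Rightarrow> 'a) \<Rightarrow> bool" where
  "coseparable C \<Delta> \<epsilon> \<delta> \<longleftrightarrow> coring C \<Delta> \<epsilon> \<and>
     bilin (tensor C C) ring_bimod \<delta> \<and>
     (\<forall>c\<in>bcarr C. \<delta> (\<Delta> c) = \<epsilon> c) \<and>
     (\<forall>c\<in>bcarr C. \<forall>d\<in>bcarr C.
        tlift C C C (\<lambda>x y. bract C x (\<delta> (tens C C y d))) (\<Delta> c)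
      = tlift C C C (\<lambda>x y. blact C (\<delta> (tens C C c x)) y) (\<Delta> d))"

definition frobenius_coseparable :: "('a::ring_1, 'c, 'z) bimod_scheme \<Rightarrow> ('c \<Rightarrow> ('c \<times> 'c) list set) \<Rightarrow>
    ('c \<Rightarrow> 'a) \<Rightarrow> (('c \<times> 'c) list set \<Rightarrow> 'a) \<Rightarrow> 'c \<Rightarrow> bool" where
  "frobenius_coseparable C \<Delta> \<epsilon> \<delta> e \<longleftrightarrow> coseparable C \<Delta> \<epsilon> \<delta> \<and>
     e \<in> bcarr C \<and> (\<forall>a. blact C a e = bract C e a) \<and>
     (\<forall>c\<in>bcarr C. \<delta> (tens C C c e) = \<epsilon> c \<and> \<delta> (tens C C e c) = \<epsilon> c)"

definition nu :: "('a, 'c, 'z) bimod_scheme \<Rightarrow> (('c \<times> 'c) list set \<Rightarrow> 'a) \<Rightarrow>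
    ('a, 'm, 'w) bimod_scheme \<Rightarrow> ('m \<Rightarrow> ('m \<times> 'c) list set) \<Rightarrow> ('m \<times> 'c) list set \<Rightarrow> 'm" where
  "nu C \<delta> M \<rho> = tlift M C M
     (\<lambda>m c. tlift M C M (\<lambda>m0 m1. bract M m0 (\<delta> (tens C C m1 c))) (\<rho> m))"

definition etabar :: "('a, 'c, 'z) bimod_scheme \<Rightarrow> 'c \<Rightarrow> ('a, 'n, 'w) bimod_scheme \<Rightarrow> 'n \<Rightarrow> ('n \<times> 'c) list set" where
  "etabar C e N n = tens N C n e"

text \<open>r_N = \<nu>_{u_!(N)} \<circ> u_*(\<eta>bar_N) : N \<otimes>_A C \<rightarrow> N \<otimes>_A C, where u_!(N) = N \<otimes>_A C carries
  the comodule structure N \<otimes>_A \<Delta>.\<close>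

definition rmap :: "('a, 'c, 'z) bimod_scheme \<Rightarrow> ('c \<Rightarrow> ('c \<times> 'c) list set) \<Rightarrow>
    (('c \<times> 'c) list set \<Rightarrow> 'a) \<Rightarrow> 'c \<Rightarrow> ('a, 'n, 'w) bimod_scheme \<Rightarrow> ('n \<times> 'c) list set \<Rightarrow> ('n \<times> 'c) list set" where
  "rmap C \<Delta> \<delta> e N t =
     nu C \<delta> (tensor N C) (coact_free N C \<Delta>) (map_tensor N C (tensor N C) (etabar C e N) t)"

text \<open>Formal smoothness / cosmoothness of the comodule (M, \<rho>) tested against the right
  A-module N (the definitions in the paper quantify over all N; this is done in the theorem).\<close>

definition formally_smooth_at :: "('a, 'c, 'z) bimod_scheme \<Rightarrow> ('c \<Rightarrow> ('c \<times> 'c) list set) \<Rightarrow>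
    (('c \<times> 'c) list set \<Rightarrow> 'a) \<Rightarrow> 'c \<Rightarrow>
    ('a, 'm, 'w) bimod_scheme \<Rightarrow> ('m \<Rightarrow> ('m \<times> 'c) list set) \<Rightarrow> ('a, 'n, 'v) bimod_scheme \<Rightarrow> bool" where
  "formally_smooth_at C \<Delta> \<delta> e M \<rho> N \<longleftrightarrow>
     (\<forall>g. comod_hom C M \<rho> (tensor N C) (coact_free N C \<Delta>) g \<longrightarrow>
        (\<exists>h. comod_hom C M \<rho> (tensor N C) (coact_free N C \<Delta>) h \<and>
             (\<forall>m\<in>bcarr M. rmap C \<Delta> \<delta> e N (h m) = g m)))"

definition formally_cosmooth_at :: "('a, 'c, 'z) bimod_scheme \<Rightarrow> ('c \<Rightarrow> ('c \<times> 'c) list set) \<Rightarrow>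
    (('c \<times> 'c) list set \<Rightarrow> 'a) \<Rightarrow> 'c \<Rightarrow>
    ('a, 'm, 'w) bimod_scheme \<Rightarrow> ('m \<Rightarrow> ('m \<times> 'c) list set) \<Rightarrow> ('a, 'n, 'v) bimod_scheme \<Rightarrow> bool" where
  "formally_cosmooth_at C \<Delta> \<delta> e M \<rho> N \<longleftrightarrow>
     (\<forall>g. comod_hom C (tensor N C) (coact_free N C \<Delta>) M \<rho> g \<longrightarrow>
        (\<exists>h. comod_hom C (tensor N C) (coact_free N C \<Delta>) M \<rho> h \<and>
             (\<forall>t\<in>bcarr (tensor N C). h (rmap C \<Delta> \<delta> e N t) = g t)))"

end

theory Submission
  imports Defs "HOL-Library.Multiset"
begin

(*
  The whole content is that the map r_N : N \<otimes>_A C \<rightarrow> N \<otimes>_A C,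
  n \<otimes> c \<mapsto> \<Sum> n \<otimes> e(1) \<delta>(e(2) \<otimes> c), is the identity: by the coseparability identity
  \<Sum> e(1) \<delta>(e(2) \<otimes> c) = \<Sum> \<delta>(e \<otimes> c(1)) c(2), and by the Frobenius property and the counit
  law this is c.  Once r_N = id, every comodule map g into or out of N \<otimes>_A C lifts
  through r_N, namely as g itself.
*)

lemma abgroup_props: assumes "abgroup X" shows
  ag_zero: "bzero X \<in> bcarr X" and
  ag_add: "x \<in> bcarr X \<Longrightarrow> y \<in> bcarr X \<Longrightarrow> badd X x y \<in> bcarr X" and
  ag_assoc: "x \<in> bcarr X \<Longrightarrow> y \<in> bcarr X \<Longrightarrow> z \<in> bcarr X \<Longrightarrow> badd X (badd X x y) z = badd X x (badd X y z)" and
  ag_comm: "x \<in> bcarr X \<Longrightarrow> y \<in> bcarr X \<Longrightarrow> badd X x y = badd X y x" and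
  ag_zl: "x \<in> bcarr X \<Longrightarrow> badd X (bzero X) x = x" and
  ag_zr: "x \<in> bcarr X \<Longrightarrow> badd X x (bzero X) = x" and
  ag_inv: "x \<in> bcarr X \<Longrightarrow> \<exists>y\<in>bcarr X. badd X x y = bzero X"
  using assms unfolding abgroup_def by (metis)+

lemma ag_cancel: assumes "abgroup X" "x \<in> bcarr X" "y \<in> bcarr X" "z \<in> bcarr X" "badd X x z = badd X y z"
  shows "x = y"
proof -
  obtain w where w: "w \<in> bcarr X" "badd X z w = bzero X" using ag_inv[OF assms(1,4)] by blast
  have "x = badd X x (badd X z w)" by (simp only: w(2) ag_zr[OF assms(1,2)])
  also have "\<dots> = badd X (badd X x z) w" by (rule ag_assoc[OF assms(1,2,4) w(1), symmetric])
  also have "\<dots> = badd X (badd X y z) w" using assms(5) by simp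
  also have "\<dots> = badd X y (badd X z w)" by (rule ag_assoc[OF assms(1,3,4) w(1)])
  also have "\<dots> = y" by (simp only: w(2) ag_zr[OF assms(1,3)])
  finally show ?thesis .
qed

lemma ag_swap4: assumes "abgroup X" "a \<in> bcarr X" "b \<in> bcarr X" "c \<in> bcarr X" "d \<in> bcarr X"
  shows "badd X (badd X a b) (badd X c d) = badd X (badd X a c) (badd X b d)"
  using assms by (metis ag_add ag_assoc ag_comm)

lemma ag_lcomm: assumes "abgroup X" "a \<in> bcarr X" "b \<in> bcarr X" "c \<in> bcarr X"
  shows "badd X a (badd X b c) = badd X b (badd X a c)"
  using assms by (metis ag_assoc ag_comm)

lemma right_module_props: assumes "right_module C" shows
  rm_ag: "abgroup C" and
  rm_radd: "x \<in> bcarr C \<Longrightarrow> y \<in> bcarr C \<Longrightarrow> bract C (badd C x y) a = badd C (bract C x a) (bract C y a)" and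
  rm_rsum: "x \<in> bcarr C \<Longrightarrow> bract C x (a+b) = badd C (bract C x a) (bract C x b)" and
  rm_rmul: "x \<in> bcarr C \<Longrightarrow> bract C x (a*b) = bract C (bract C x a) b" and
  rm_rone: "x \<in> bcarr C \<Longrightarrow> bract C x 1 = x" and
  rm_rcl: "x \<in> bcarr C \<Longrightarrow> bract C x a \<in> bcarr C"
  using assms unfolding right_module_def by blast+

lemma bimodule_right_module: "bimodule C \<Longrightarrow> right_module C" unfolding bimodule_def by simp

lemma bimodule_props: assumes "bimodule C" shows
  bm_lcl: "x \<in> bcarr C \<Longrightarrow> blact C a x \<in> bcarr C" and
  bm_ladd: "x \<in> bcarr C \<Longrightarrow> y \<in> bcarr C \<Longrightarrow> blact C a (badd C x y) = badd C (blact C a x) (blact C a y)" and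
  bm_comp: "x \<in> bcarr C \<Longrightarrow> bract C (blact C a x) b = blact C a (bract C x b)"
  using assms unfolding bimodule_def by blast+

lemmas bm_ag = rm_ag[OF bimodule_right_module] and bm_radd = rm_radd[OF bimodule_right_module] and bm_rsum = rm_rsum[OF bimodule_right_module]
  and bm_rmul = rm_rmul[OF bimodule_right_module] and bm_rone = rm_rone[OF bimodule_right_module] and bm_rcl = rm_rcl[OF bimodule_right_module]

definition lsum :: "('a,'x,'v) bimod_scheme \<Rightarrow> ('m \<Rightarrow> 'c \<Rightarrow> 'x) \<Rightarrow> ('m\<times>'c) list \<Rightarrow> 'x" where
 "lsum X \<beta> xs = foldr (\<lambda>(m,c) acc. badd X (\<beta> m c) acc) xs (bzero X)"

lemma lsum_Nil[simp]: "lsum X \<beta> [] = bzero X" by (simp add: lsum_def)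
lemma lsum_Cons[simp]: "lsum X \<beta> ((m,c)#xs) = badd X (\<beta> m c) (lsum X \<beta> xs)" by (simp add: lsum_def)
lemma tlift_eq_lsum: "tlift M C X \<beta> T = lsum X \<beta> (trep T)" by (simp add: tlift_def lsum_def)

definition values_in :: "('a,'x,'v) bimod_scheme \<Rightarrow> ('m \<Rightarrow> 'c \<Rightarrow> 'x) \<Rightarrow> ('m\<times>'c) list \<Rightarrow> bool" where
  "values_in X \<beta> xs \<longleftrightarrow> (\<forall>p\<in>set xs. case_prod \<beta> p \<in> bcarr X)"

lemma values_in_simps[simp]: "values_in X \<beta> []" "values_in X \<beta> ((m,c)#xs) \<longleftrightarrow> \<beta> m c \<in> bcarr X \<and> values_in X \<beta> xs"
  "values_in X \<beta> (xs@ys) \<longleftrightarrow> values_in X \<beta> xs \<and> values_in X \<beta> ys"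
  unfolding values_in_def by (simp_all add: ball_Un)

lemma lsum_closed: "abgroup X \<Longrightarrow> values_in X \<beta> xs \<Longrightarrow> lsum X \<beta> xs \<in> bcarr X"
  by (induction xs) (auto simp: ag_zero ag_add)

lemma lsum_append: "abgroup X \<Longrightarrow> values_in X \<beta> xs \<Longrightarrow> values_in X \<beta> ys \<Longrightarrow>
   lsum X \<beta> (xs@ys) = badd X (lsum X \<beta> xs) (lsum X \<beta> ys)"
  by (induction xs) (auto simp: ag_zl ag_assoc lsum_closed)

lemma lsum_perm: "abgroup X \<Longrightarrow> values_in X \<beta> xs \<Longrightarrow> mset xs = mset ys \<Longrightarrow> lsum X \<beta> xs = lsum X \<beta> ys"
proof (induction xs arbitrary: ys)
  case Nil then show ?case by simp
next
  case (Cons x xs)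
  obtain m c where x: "x = (m,c)" by force
  have "x \<in> set ys" using Cons.prems(3) by (metis list.set_intros(1) set_mset_mset)
  then obtain ys1 ys2 where ys: "ys = ys1 @ x # ys2" by (meson split_list)
  have vys: "values_in X \<beta> ys" using Cons.prems(2,3) unfolding values_in_def by (metis set_mset_mset)
  have ms: "mset xs = mset (ys1 @ ys2)" using Cons.prems(3) ys by simp
  have bx: "\<beta> m c \<in> bcarr X" using Cons.prems(2) x by simp
  have v1: "values_in X \<beta> ys1" "values_in X \<beta> ys2" using vys ys x by auto
  have "lsum X \<beta> ys = badd X (lsum X \<beta> ys1) (badd X (\<beta> m c) (lsum X \<beta> ys2))"
    using ys x v1 bx Cons.prems(1) by (simp add: lsum_append)
  also have "\<dots> = badd X (\<beta> m c) (badd X (lsum X \<beta> ys1) (lsum X \<beta> ys2))"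
    using v1 bx Cons.prems(1) by (simp add: ag_lcomm lsum_closed)
  also have "\<dots> = badd X (\<beta> m c) (lsum X \<beta> xs)"
    using Cons.IH[OF Cons.prems(1) _ ms] Cons.prems(2) x v1 Cons.prems(1) by (simp add: lsum_append)
  finally show ?case using x by simp
qed

lemma lsum_cong: "(\<And>x y. (x,y) \<in> set xs \<Longrightarrow> f x y = g x y) \<Longrightarrow> lsum X f xs = lsum X g xs"
  by (induction xs) auto

lemma lsum_map: "lsum X \<beta> (map (\<lambda>(x,y). (f x y, g x y)) xs) = lsum X (\<lambda>x y. \<beta> (f x y) (g x y)) xs"
  by (induction xs) auto

lemma lsum_add: assumes X: "abgroup X" shows
  "(\<And>x y. (x,y) \<in> set xs \<Longrightarrow> f x y \<in> bcarr X \<and> g x y \<in> bcarr X) \<Longrightarrow>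
   lsum X (\<lambda>x y. badd X (f x y) (g x y)) xs = badd X (lsum X f xs) (lsum X g xs)"
proof (induction xs)
  case Nil then show ?case using X by (simp add: ag_zr ag_zero)
next
  case (Cons p xs)
  obtain x y where p: "p = (x,y)" by force
  have v: "values_in X f xs" "values_in X g xs" using Cons.prems unfolding values_in_def by fastforce+
  show ?case using Cons p v X by (simp add: ag_swap4 lsum_closed)
qed

lemma rm_zero_ract: assumes "right_module X" shows "bract X (bzero X) a = bzero X"
proof -
  have X: "abgroup X" using rm_ag[OF assms] .
  have z: "bzero X \<in> bcarr X" using ag_zero[OF X] .
  have za: "bract X (bzero X) a \<in> bcarr X" using rm_rcl[OF assms z] .
  have "badd X (bract X (bzero X) a) (bract X (bzero X) a) = bract X (badd X (bzero X) (bzero X)) a"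
    using rm_radd[OF assms z z] by simp
  also have "\<dots> = bract X (bzero X) a" using ag_zl[OF X z] by simp
  also have "\<dots> = badd X (bzero X) (bract X (bzero X) a)" using ag_zl[OF X za] by simp
  finally show ?thesis using ag_cancel[OF X za z za] ag_comm[OF X z za] by metis
qed

lemma lsum_ract: assumes X: "right_module X" shows
  "values_in X f xs \<Longrightarrow> lsum X (\<lambda>x y. bract X (f x y) a) xs = bract X (lsum X f xs) a"
proof (induction xs)
  case Nil then show ?case using rm_zero_ract[OF X] by simp
next
  case (Cons p xs)
  obtain x y where p: "p = (x,y)" by force
  have v: "values_in X f xs" "f x y \<in> bcarr X" using Cons.prems p by auto
  have s: "lsum X f xs \<in> bcarr X" using lsum_closed[OF rm_ag[OF X] v(1)] .
  show ?case using Cons.IH[OF v(1)] p rm_radd[OF X v(2) s, of a] by simp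
qed

section \<open>A list presentation of the tensor relation\<close>

text \<open>The relation \<open>trel\<close> defining the tensor product is a subgroup of \<open>\<int>\<close>-valued functions.
  We describe it by lists instead: \<open>elem_rel u v\<close> says that the formal sums \<open>u\<close> and \<open>v\<close> differ
  by a sum of the defining relations.  Equivalence of tensors then becomes a statement about
  multisets, which is what makes induced maps computable.\<close>

inductive elem_rel :: "('a, 'm, 'z) bimod_scheme \<Rightarrow> ('a, 'c, 'w) bimod_scheme \<Rightarrow> ('m \<times> 'c) list \<Rightarrow> ('m\<times>'c) list \<Rightarrow> bool"
  for M C where
  er_nil: "elem_rel M C [] []"
| er_addl: "m \<in> bcarr M \<Longrightarrow> m' \<in> bcarr M \<Longrightarrow> c \<in> bcarr C \<Longrightarrow> elem_rel M C [(badd M m m', c)] [(m,c),(m',c)]"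
| er_addr: "m \<in> bcarr M \<Longrightarrow> c \<in> bcarr C \<Longrightarrow> c' \<in> bcarr C \<Longrightarrow> elem_rel M C [(m, badd C c c')] [(m,c),(m,c')]"
| er_bal: "m \<in> bcarr M \<Longrightarrow> c \<in> bcarr C \<Longrightarrow> elem_rel M C [(bract M m a, c)] [(m, blact C a c)]"
| er_app: "elem_rel M C u v \<Longrightarrow> elem_rel M C u' v' \<Longrightarrow> elem_rel M C (u@u') (v@v')"
| er_swap: "elem_rel M C u v \<Longrightarrow> elem_rel M C v u"

lemma ind_count_list: "ind q p = int (count_list [q] p)" by (simp add: ind_def)
lemma count_list_pair: "int (count_list [a,b] p) = int (count_list [a] p) + int (count_list [b] p)" by simp

lemma trel_elem_rel: "f \<in> trel M C \<Longrightarrow> \<exists>u v. elem_rel M C u v \<and> (\<forall>p. f p = int (count_list u p) - int (count_list v p))"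
proof (induction rule: trel.induct)
  case zero then show ?case by (intro exI[of _ "[]"]) (auto intro: er_nil)
next
  case (addl m m' c) then show ?case
    by (intro exI[of _ "[(badd M m m', c)]"] exI[of _ "[(m,c),(m',c)]"]) (auto intro: er_addl simp: ind_count_list count_list_pair)
next
  case (addr m c c') then show ?case
    by (intro exI[of _ "[(m, badd C c c')]"] exI[of _ "[(m,c),(m,c')]"]) (auto intro: er_addr simp: ind_count_list count_list_pair)
next
  case (bal m c a) then show ?case
    by (intro exI[of _ "[(bract M m a, c)]"] exI[of _ "[(m, blact C a c)]"]) (auto intro: er_bal simp: ind_count_list)
next
  case (plus f g)
  then obtain u v u' v' where "elem_rel M C u v" "elem_rel M C u' v'" "\<forall>p. f p = int (count_list u p) - int (count_list v p)"
    "\<forall>p. g p = int (count_list u' p) - int (count_list v' p)" by blast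
  then show ?case by (intro exI[of _ "u@u'"] exI[of _ "v@v'"]) (auto intro: er_app)
next
  case (uminus f)
  then obtain u v where "elem_rel M C u v" "\<forall>p. f p = int (count_list u p) - int (count_list v p)" by blast
  then show ?case by (intro exI[of _ v] exI[of _ u]) (auto intro: er_swap)
qed

lemma elem_rel_trel: "elem_rel M C u v \<Longrightarrow> (\<lambda>p. int (count_list u p) - int (count_list v p)) \<in> trel M C"
proof (induction rule: elem_rel.induct)
  case er_nil then show ?case using trel.zero by simp
next
  case (er_addl m m' c)
  have "(\<lambda>p. ind (badd M m m', c) p - ind (m, c) p - ind (m', c) p) \<in> trel M C" using er_addl by (rule trel.addl)
  moreover have "(\<lambda>p. ind (badd M m m', c) p - ind (m, c) p - ind (m', c) p) = (\<lambda>p. int (count_list [(badd M m m', c)] p) - int (count_list [(m,c),(m',c)] p))"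
    by (rule ext) (simp add: ind_count_list count_list_pair del: count_list.simps)
  ultimately show ?case by simp
next
  case (er_addr m c c')
  have "(\<lambda>p. ind (m, badd C c c') p - ind (m, c) p - ind (m, c') p) \<in> trel M C" using er_addr by (rule trel.addr)
  moreover have "(\<lambda>p. ind (m, badd C c c') p - ind (m, c) p - ind (m, c') p) = (\<lambda>p. int (count_list [(m, badd C c c')] p) - int (count_list [(m,c),(m,c')] p))"
    by (rule ext) (simp add: ind_count_list count_list_pair del: count_list.simps)
  ultimately show ?case by simp
next
  case (er_bal m c a)
  have "(\<lambda>p. ind (bract M m a, c) p - ind (m, blact C a c) p) \<in> trel M C" using er_bal by (rule trel.bal)
  moreover have "(\<lambda>p. ind (bract M m a, c) p - ind (m, blact C a c) p) = (\<lambda>p. int (count_list [(bract M m a, c)] p) - int (count_list [(m, blact C a c)] p))"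
    by (rule ext) (simp add: ind_count_list count_list_pair del: count_list.simps)
  ultimately show ?case by simp
next
  case (er_app u v u' v')
  from trel.plus[OF er_app.IH] show ?case by (simp add: algebra_simps)
next
  case (er_swap u v)
  from trel.uminus[OF er_swap.IH] show ?case by (simp add: algebra_simps)
qed

lemma tequiv_iff_elem_rel: "tequiv M C xs ys \<longleftrightarrow> (\<exists>u v. elem_rel M C u v \<and> mset xs + mset v = mset ys + mset u)"
proof
  assume "tequiv M C xs ys"
  then obtain u v where rel: "elem_rel M C u v" and h: "\<forall>p. int (count_list xs p) - int (count_list ys p) = int (count_list u p) - int (count_list v p)"
    unfolding tequiv_def using trel_elem_rel by blast
  have "mset xs + mset v = mset ys + mset u"
  proof (rule multiset_eqI)
    fix p from h[rule_format, of p] show "count (mset xs + mset v) p = count (mset ys + mset u) p"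
      by (simp add: count_mset)
  qed
  with rel show "\<exists>u v. elem_rel M C u v \<and> mset xs + mset v = mset ys + mset u" by blast
next
  assume "\<exists>u v. elem_rel M C u v \<and> mset xs + mset v = mset ys + mset u"
  then obtain u v where rel: "elem_rel M C u v" and h: "mset xs + mset v = mset ys + mset u" by blast
  have "(\<lambda>p. int (count_list xs p) - int (count_list ys p)) = (\<lambda>p. int (count_list u p) - int (count_list v p))"
  proof
    fix p from arg_cong[OF h, of "\<lambda>X. count X p"] show "int (count_list xs p) - int (count_list ys p) = int (count_list u p) - int (count_list v p)"
      by (simp add: count_mset)
  qed
  with elem_rel_trel[OF rel] show "tequiv M C xs ys" unfolding tequiv_def by simp
qed

lemma tequiv_refl: "tequiv M C xs xs"
  unfolding tequiv_iff_elem_rel by (intro exI[of _ "[]"]) (auto intro: er_nil)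

lemma tequiv_sym: "tequiv M C xs ys \<Longrightarrow> tequiv M C ys xs"
  unfolding tequiv_iff_elem_rel by (metis er_swap)

lemma tequiv_trans: "tequiv M C xs ys \<Longrightarrow> tequiv M C ys zs \<Longrightarrow> tequiv M C xs zs"
  unfolding tequiv_iff_elem_rel
proof (elim exE conjE)
  fix u v u' v' assume "elem_rel M C u v" "elem_rel M C u' v'" and h1: "mset xs + mset v = mset ys + mset u"
    and h2: "mset ys + mset v' = mset zs + mset u'"
  have "mset xs + mset (v@v') = mset zs + mset (u@u')"
  proof -
    have "mset xs + mset (v@v') = (mset xs + mset v) + mset v'" by simp
    also have "\<dots> = (mset ys + mset v') + mset u" using h1 by (simp add: algebra_simps)
    also have "\<dots> = mset zs + mset (u@u')" using h2 by (simp add: algebra_simps)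
    finally show ?thesis .
  qed
  then show "\<exists>u v. elem_rel M C u v \<and> mset xs + mset v = mset zs + mset u"
    using er_app[OF \<open>elem_rel M C u v\<close> \<open>elem_rel M C u' v'\<close>] by blast
qed

declare tequiv_trans [trans]

lemma tequiv_app: "tequiv M C xs ys \<Longrightarrow> tequiv M C xs' ys' \<Longrightarrow> tequiv M C (xs@xs') (ys@ys')"
  unfolding tequiv_iff_elem_rel
proof (elim exE conjE)
  fix u v u' v' assume "elem_rel M C u v" "elem_rel M C u' v'" and h1: "mset xs + mset v = mset ys + mset u"
    and h2: "mset xs' + mset v' = mset ys' + mset u'"
  have "mset (xs@xs') + mset (v@v') = mset (ys@ys') + mset (u@u')"
    using h1 h2 by (simp add: algebra_simps) (metis add.assoc add.commute)
  then show "\<exists>u v. elem_rel M C u v \<and> mset (xs@xs') + mset v = mset (ys@ys') + mset u"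
    using er_app[OF \<open>elem_rel M C u v\<close> \<open>elem_rel M C u' v'\<close>] by blast
qed

lemma tequiv_mset: "mset xs = mset ys \<Longrightarrow> tequiv M C xs ys"
  unfolding tequiv_iff_elem_rel by (intro exI[of _ "[]"]) (auto intro: er_nil)

lemma tequiv_elem_rel: "elem_rel M C u v \<Longrightarrow> tequiv M C u v"
  unfolding tequiv_iff_elem_rel by (intro exI[of _ v] exI[of _ u]) (auto intro: er_swap simp: add.commute)

section \<open>Induced maps on the tensor product\<close>

text \<open>A map \<open>\<beta> : M \<times> C \<rightarrow> X\<close> is balanced if it is biadditive and \<open>A\<close>-balanced on the carriers
  (the closure conditions on \<open>M\<close> and \<open>C\<close> make the definition self-contained).  These are
  exactly the maps inducing a map on \<open>M \<otimes>\<^sub>A C\<close>.\<close>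

definition balanced :: "('a, 'm, 'z) bimod_scheme \<Rightarrow> ('a, 'c, 'w) bimod_scheme \<Rightarrow> ('a,'x,'v) bimod_scheme \<Rightarrow>
   ('m \<Rightarrow> 'c \<Rightarrow> 'x) \<Rightarrow> bool" where
  "balanced M C X \<beta> \<longleftrightarrow>
     (\<forall>m\<in>bcarr M. \<forall>m'\<in>bcarr M. badd M m m' \<in> bcarr M) \<and>
     (\<forall>m\<in>bcarr M. \<forall>a. bract M m a \<in> bcarr M) \<and>
     (\<forall>c\<in>bcarr C. \<forall>c'\<in>bcarr C. badd C c c' \<in> bcarr C) \<and>
     (\<forall>c\<in>bcarr C. \<forall>a. blact C a c \<in> bcarr C) \<and>
     (\<forall>m\<in>bcarr M. \<forall>c\<in>bcarr C. \<beta> m c \<in> bcarr X) \<and>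
     (\<forall>m\<in>bcarr M. \<forall>m'\<in>bcarr M. \<forall>c\<in>bcarr C. \<beta> (badd M m m') c = badd X (\<beta> m c) (\<beta> m' c)) \<and>
     (\<forall>m\<in>bcarr M. \<forall>c\<in>bcarr C. \<forall>c'\<in>bcarr C. \<beta> m (badd C c c') = badd X (\<beta> m c) (\<beta> m c')) \<and>
     (\<forall>m\<in>bcarr M. \<forall>c\<in>bcarr C. \<forall>a. \<beta> (bract M m a) c = \<beta> m (blact C a c))"

lemma elem_rel_lsum: assumes X: "abgroup X" and B: "balanced M C X \<beta>"
  shows "elem_rel M C u v \<Longrightarrow> set u \<subseteq> bcarr M \<times> bcarr C \<and> set v \<subseteq> bcarr M \<times> bcarr C \<and> lsum X \<beta> u = lsum X \<beta> v"
proof (induction rule: elem_rel.induct)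
  case er_nil then show ?case by simp
next
  case (er_addl m m' c) then show ?case using B X unfolding balanced_def by (simp add: ag_zr ag_add)
next
  case (er_addr m c c') then show ?case using B X unfolding balanced_def by (simp add: ag_zr ag_add)
next
  case (er_bal m c a) then show ?case using B X unfolding balanced_def by (simp add: ag_zr ag_add)
next
  case (er_app u v u' v')
  have "values_in X \<beta> u" "values_in X \<beta> v" "values_in X \<beta> u'" "values_in X \<beta> v'" using er_app.IH B unfolding balanced_def values_in_def by fast+
  then show ?case using er_app.IH X by (simp add: lsum_append)
next
  case (er_swap u v) then show ?case by simp
qed

text \<open>Hence the sum of a balanced map is invariant under \<open>tequiv\<close>: \<open>tlift\<close> is well defined.\<close>

lemma lsum_tequiv: assumes X: "abgroup X" and B: "balanced M C X \<beta>"
  and xs: "set xs \<subseteq> bcarr M \<times> bcarr C" and ys: "set ys \<subseteq> bcarr M \<times> bcarr C" and eq: "tequiv M C xs ys"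
  shows "lsum X \<beta> xs = lsum X \<beta> ys"
proof -
  obtain u v where rel: "elem_rel M C u v" and h: "mset xs + mset v = mset ys + mset u" using eq unfolding tequiv_iff_elem_rel by blast
  have uv: "set u \<subseteq> bcarr M \<times> bcarr C" "set v \<subseteq> bcarr M \<times> bcarr C" "lsum X \<beta> u = lsum X \<beta> v" using elem_rel_lsum[OF X B rel] by auto
  have vl: "\<And>zs. set zs \<subseteq> bcarr M \<times> bcarr C \<Longrightarrow> values_in X \<beta> zs" using B unfolding balanced_def values_in_def by fast
  have "lsum X \<beta> (xs @ v) = lsum X \<beta> (ys @ u)" using lsum_perm[OF X, of \<beta> "xs@v" "ys@u"] h vl xs ys uv by simp
  then have "badd X (lsum X \<beta> xs) (lsum X \<beta> v) = badd X (lsum X \<beta> ys) (lsum X \<beta> v)"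
    using vl xs ys uv X by (simp add: lsum_append)
  then show ?thesis using ag_cancel[OF X] lsum_closed[OF X] vl xs ys uv by metis
qed

abbreviation pairs_in :: "('a, 'm, 'z) bimod_scheme \<Rightarrow> ('a, 'c, 'w) bimod_scheme \<Rightarrow> ('m\<times>'c) list \<Rightarrow> bool" where
  "pairs_in M C xs \<equiv> set xs \<subseteq> bcarr M \<times> bcarr C"

lemma tclass_eq: "tequiv M C xs ys \<Longrightarrow> tclass M C xs = tclass M C ys"
  unfolding tclass_def by (auto intro: tequiv_trans tequiv_sym)

lemma tclass_self: "pairs_in M C xs \<Longrightarrow> xs \<in> tclass M C xs"
  unfolding tclass_def by (simp add: tequiv_refl)

lemma tclass_in_tensor: "pairs_in M C xs \<Longrightarrow> tclass M C xs \<in> bcarr (tensor M C)"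
  unfolding tensor_def by auto

lemma trep_in_class: assumes "X \<in> bcarr (tensor M C)"
  shows "pairs_in M C (trep X)" "X = tclass M C (trep X)"
proof -
  obtain xs where xs: "pairs_in M C xs" "X = tclass M C xs" using assms unfolding tensor_def by auto
  have "trep X \<in> X" unfolding trep_def using tclass_self[OF xs(1)] xs(2) by (metis someI)
  then have "pairs_in M C (trep X)" "tequiv M C xs (trep X)" using xs(2) unfolding tclass_def by auto
  then show "pairs_in M C (trep X)" "X = tclass M C (trep X)" using xs(2) tclass_eq by blast+
qed

lemma trep_tclass: assumes "pairs_in M C xs" shows "pairs_in M C (trep (tclass M C xs))" "tequiv M C xs (trep (tclass M C xs))"
proof -
  have "trep (tclass M C xs) \<in> tclass M C xs" unfolding trep_def using tclass_self[OF assms] by (metis someI)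
  then show "pairs_in M C (trep (tclass M C xs))" "tequiv M C xs (trep (tclass M C xs))" unfolding tclass_def by auto
qed

lemma tensor_elemE: assumes "X \<in> bcarr (tensor M C)" obtains xs where "pairs_in M C xs" "X = tclass M C xs"
  using trep_in_class[OF assms] by blast

lemma tlift_tclass: assumes "abgroup X" "balanced M C X \<beta>" "pairs_in M C xs"
  shows "tlift M C X \<beta> (tclass M C xs) = lsum X \<beta> xs"
  unfolding tlift_eq_lsum using lsum_tequiv[OF assms(1,2) trep_tclass(1)[OF assms(3)] assms(3) tequiv_sym[OF trep_tclass(2)[OF assms(3)]]] .

lemma tensor_add_tclass: assumes "pairs_in M C xs" "pairs_in M C ys"
  shows "badd (tensor M C) (tclass M C xs) (tclass M C ys) = tclass M C (xs@ys)"
proof -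
  have "tequiv M C (trep (tclass M C xs) @ trep (tclass M C ys)) (xs@ys)"
    by (rule tequiv_app; rule tequiv_sym; rule trep_tclass(2); fact)
  then show ?thesis unfolding tensor_def by (simp add: tclass_eq)
qed

lemma tensor_zero_tclass: "bzero (tensor M C) = tclass M C []" unfolding tensor_def by simp

definition ract_pairs :: "('a, 'c, 'w) bimod_scheme \<Rightarrow> 'a \<Rightarrow> ('m\<times>'c) list \<Rightarrow> ('m\<times>'c) list" where
  "ract_pairs C a = map (\<lambda>(m, c). (m, bract C c a))"
definition lact_pairs :: "('a, 'm, 'w) bimod_scheme \<Rightarrow> 'a \<Rightarrow> ('m\<times>'c) list \<Rightarrow> ('m\<times>'c) list" where
  "lact_pairs M a = map (\<lambda>(m, c). (blact M a m, c))"

lemma ract_pairs_simps[simp]: "ract_pairs C a [] = []" "ract_pairs C a ((m,c)#xs) = (m, bract C c a) # ract_pairs C a xs"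
  "ract_pairs C a (xs@ys) = ract_pairs C a xs @ ract_pairs C a ys" by (simp_all add: ract_pairs_def)
lemma lact_pairs_simps[simp]: "lact_pairs M a [] = []" "lact_pairs M a ((m,c)#xs) = (blact M a m, c) # lact_pairs M a xs"
  "lact_pairs M a (xs@ys) = lact_pairs M a xs @ lact_pairs M a ys" by (simp_all add: lact_pairs_def)

lemma lsum_lact_pairs: "lsum X \<beta> (lact_pairs M a xs) = lsum X (\<lambda>x y. \<beta> (blact M a x) y) xs"
  unfolding lact_pairs_def by (rule lsum_map)
lemma lsum_ract_pairs: "lsum X \<beta> (ract_pairs C a xs) = lsum X (\<lambda>x y. \<beta> x (bract C y a)) xs"
  unfolding ract_pairs_def by (rule lsum_map)

lemma elem_rel_ract_pairs: assumes C: "bimodule C" shows "elem_rel M C u v \<Longrightarrow> elem_rel M C (ract_pairs C a u) (ract_pairs C a v)"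
proof (induction rule: elem_rel.induct)
  case er_nil then show ?case by (simp add: elem_rel.er_nil)
next
  case (er_addl m m' c)
  have "elem_rel M C [(badd M m m', bract C c a)] [(m, bract C c a), (m', bract C c a)]"
    by (rule elem_rel.er_addl) (use er_addl bm_rcl[OF C] in auto)
  then show ?case by simp
next
  case (er_addr m c c')
  have "elem_rel M C [(m, badd C (bract C c a) (bract C c' a))] [(m, bract C c a), (m, bract C c' a)]"
    by (rule elem_rel.er_addr) (use er_addr bm_rcl[OF C] in auto)
  then show ?case using er_addr bm_radd[OF C] by simp
next
  case (er_bal m c b)
  have "elem_rel M C [(bract M m b, bract C c a)] [(m, blact C b (bract C c a))]"
    by (rule elem_rel.er_bal) (use er_bal bm_rcl[OF C] in auto)
  then show ?case using er_bal bm_comp[OF C] by simp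
next
  case (er_app u v u' v') then show ?case using elem_rel.er_app by simp
next
  case (er_swap u v) show ?case using er_swap.IH by (rule elem_rel.er_swap)
qed

lemma elem_rel_lact_pairs: assumes M: "bimodule M" shows "elem_rel M C u v \<Longrightarrow> elem_rel M C (lact_pairs M a u) (lact_pairs M a v)"
proof (induction rule: elem_rel.induct)
  case er_nil then show ?case by (simp add: elem_rel.er_nil)
next
  case (er_addl m m' c)
  have "elem_rel M C [(badd M (blact M a m) (blact M a m'), c)] [(blact M a m, c), (blact M a m', c)]"
    by (rule elem_rel.er_addl) (use er_addl bm_lcl[OF M] in auto)
  then show ?case using er_addl bm_ladd[OF M] by simp
next
  case (er_addr m c c')
  have "elem_rel M C [(blact M a m, badd C c c')] [(blact M a m, c), (blact M a m, c')]"
    by (rule elem_rel.er_addr) (use er_addr bm_lcl[OF M] in auto)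
  then show ?case by simp
next
  case (er_bal m c b)
  have "elem_rel M C [(bract M (blact M a m) b, c)] [(blact M a m, blact C b c)]"
    by (rule elem_rel.er_bal) (use er_bal bm_lcl[OF M] in auto)
  then show ?case using er_bal bm_comp[OF M] by simp
next
  case (er_app u v u' v') then show ?case using elem_rel.er_app by simp
next
  case (er_swap u v) show ?case using er_swap.IH by (rule elem_rel.er_swap)
qed

lemma tequiv_map: assumes rel: "\<And>u v. elem_rel M C u v \<Longrightarrow> elem_rel M C (map f u) (map f v)" and "tequiv M C xs ys"
  shows "tequiv M C (map f xs) (map f ys)"
proof -
  obtain u v where uv: "elem_rel M C u v" "mset xs + mset v = mset ys + mset u" using assms(2) unfolding tequiv_iff_elem_rel by blast
  have "image_mset f (mset xs + mset v) = image_mset f (mset ys + mset u)" using uv(2) by simp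
  then have "mset (map f xs) + mset (map f v) = mset (map f ys) + mset (map f u)" by simp
  then show ?thesis unfolding tequiv_iff_elem_rel using rel[OF uv(1)] by blast
qed

lemma tequiv_ract_pairs: assumes "bimodule C" "tequiv M C xs ys" shows "tequiv M C (ract_pairs C a xs) (ract_pairs C a ys)"
  using tequiv_map[OF elem_rel_ract_pairs[OF assms(1), unfolded ract_pairs_def] assms(2)] unfolding ract_pairs_def .

lemma tequiv_lact_pairs: assumes "bimodule M" "tequiv M C xs ys" shows "tequiv M C (lact_pairs M a xs) (lact_pairs M a ys)"
  using tequiv_map[OF elem_rel_lact_pairs[OF assms(1), unfolded lact_pairs_def] assms(2)] unfolding lact_pairs_def .

lemma pairs_in_ract: "bimodule C \<Longrightarrow> pairs_in M C xs \<Longrightarrow> pairs_in M C (ract_pairs C a xs)"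
  unfolding ract_pairs_def using bm_rcl by fastforce
lemma pairs_in_lact: "bimodule M \<Longrightarrow> pairs_in M C xs \<Longrightarrow> pairs_in M C (lact_pairs M a xs)"
  unfolding lact_pairs_def using bm_lcl by fastforce

lemma tensor_ract_tclass: assumes "bimodule C" "pairs_in M C xs"
  shows "bract (tensor M C) (tclass M C xs) a = tclass M C (ract_pairs C a xs)"
proof -
  have "tequiv M C (ract_pairs C a (trep (tclass M C xs))) (ract_pairs C a xs)"
    by (rule tequiv_ract_pairs[OF assms(1)], rule tequiv_sym, rule trep_tclass(2), fact)
  then show ?thesis unfolding tensor_def by (simp add: tclass_eq ract_pairs_def)
qed

lemma tensor_lact_tclass: assumes "bimodule M" "pairs_in M C xs"
  shows "blact (tensor M C) a (tclass M C xs) = tclass M C (lact_pairs M a xs)"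
proof -
  have "tequiv M C (lact_pairs M a (trep (tclass M C xs))) (lact_pairs M a xs)"
    by (rule tequiv_lact_pairs[OF assms(1)], rule tequiv_sym, rule trep_tclass(2), fact)
  then show ?thesis unfolding tensor_def by (simp add: tclass_eq lact_pairs_def)
qed

lemma tequiv_single_cons: "tequiv M C [x] xs \<Longrightarrow> tequiv M C ys zs \<Longrightarrow> tequiv M C (x#ys) (xs@zs)"
  using tequiv_app[of M C "[x]" xs ys zs] by simp

section \<open>The right module \<open>M \<otimes>\<^sub>A C\<close>\<close>

text \<open>The negative of a class is obtained by acting with \<open>-1\<close>; this and distributivity of
  the action over sums of scalars give the group and module axioms of \<open>M \<otimes>\<^sub>A C\<close>.\<close>

lemma tequiv_neg_pair: assumes C: "bimodule C" and m: "m \<in> bcarr M" and c: "c \<in> bcarr C"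
  shows "tequiv M C [(m,c),(m, bract C c (-1))] []"
proof -
  define z where "z = bract C c 0"
  have z: "z \<in> bcarr C" unfolding z_def using bm_rcl[OF C c] .
  have cz: "badd C c (bract C c (-1)) = z"
  proof -
    have "badd C c (bract C c (-1)) = badd C (bract C c 1) (bract C c (-1))" using bm_rone[OF C c] by simp
    also have "\<dots> = bract C c (1 + -1)" using bm_rsum[OF C c, of 1 "-1"] by simp
    finally show ?thesis by (simp add: z_def)
  qed
  have zz: "badd C z z = z" unfolding z_def using bm_rsum[OF C c, of 0 0] by simp
  have "elem_rel M C [(m, badd C z z)] [(m,z),(m,z)]" by (rule er_addr) (use m z in auto)
  then have doubled: "elem_rel M C [(m,z),(m,z)] [(m,z)]" using zz er_swap by fastforce
  have t1: "tequiv M C [(m,z)] []" unfolding tequiv_iff_elem_rel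
    by (intro exI[of _ "[(m,z),(m,z)]"] exI[of _ "[(m,z)]"]) (simp add: doubled)
  have "elem_rel M C [(m, badd C c (bract C c (-1)))] [(m,c),(m, bract C c (-1))]"
    by (rule er_addr) (use m c bm_rcl[OF C c] in auto)
  then have t2: "tequiv M C [(m,c),(m, bract C c (-1))] [(m,z)]" using cz by (metis tequiv_elem_rel tequiv_sym)
  show ?thesis using tequiv_trans[OF t2 t1] .
qed

lemma tequiv_neg_list: assumes C: "bimodule C" shows "pairs_in M C xs \<Longrightarrow> tequiv M C (xs @ ract_pairs C (-1) xs) []"
proof (induction xs)
  case Nil then show ?case by (simp add: tequiv_refl)
next
  case (Cons x xs)
  obtain m c where x: "x = (m,c)" by force
  have mc: "m \<in> bcarr M" "c \<in> bcarr C" using Cons.prems x by auto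
  have "tequiv M C ((x#xs) @ ract_pairs C (-1) (x#xs)) ([(m,c),(m, bract C c (-1))] @ (xs @ ract_pairs C (-1) xs))"
    by (rule tequiv_mset) (simp add: x)
  also have "tequiv M C ([(m,c),(m, bract C c (-1))] @ (xs @ ract_pairs C (-1) xs)) ([] @ [])"
    by (rule tequiv_app[OF tequiv_neg_pair[OF C mc] Cons.IH]) (use Cons.prems in auto)
  finally show ?case by simp
qed

lemma tequiv_ract_sum: assumes C: "bimodule C" shows "pairs_in M C xs \<Longrightarrow> tequiv M C (ract_pairs C (a+b) xs) (ract_pairs C a xs @ ract_pairs C b xs)"
proof (induction xs)
  case Nil then show ?case by (simp add: tequiv_refl)
next
  case (Cons x xs)
  obtain m c where x: "x = (m,c)" by force
  have mc: "m \<in> bcarr M" "c \<in> bcarr C" using Cons.prems x by auto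
  have "elem_rel M C [(m, badd C (bract C c a) (bract C c b))] [(m, bract C c a), (m, bract C c b)]"
    by (rule er_addr) (use mc bm_rcl[OF C] in auto)
  then have e1: "tequiv M C [(m, bract C c (a+b))] [(m, bract C c a), (m, bract C c b)]"
    using bm_rsum[OF C mc(2)] tequiv_elem_rel by metis
  have "tequiv M C (ract_pairs C (a+b) (x#xs)) ([(m, bract C c a), (m, bract C c b)] @ (ract_pairs C a xs @ ract_pairs C b xs))"
    using tequiv_single_cons[OF e1 Cons.IH] Cons.prems x by simp
  also have "tequiv M C ([(m, bract C c a), (m, bract C c b)] @ (ract_pairs C a xs @ ract_pairs C b xs)) (ract_pairs C a (x#xs) @ ract_pairs C b (x#xs))"
    by (rule tequiv_mset) (simp add: x)
  finally show ?case .
qed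

lemma tensor_abgroup: assumes C: "bimodule C" shows "abgroup (tensor M C)"
proof -
  let ?T = "tensor M C"
  have z: "bzero ?T \<in> bcarr ?T" by (simp add: tensor_zero_tclass tclass_in_tensor)
  have cl: "\<forall>x\<in>bcarr ?T. \<forall>y\<in>bcarr ?T. badd ?T x y \<in> bcarr ?T"
  proof (intro ballI)
    fix x y assume "x \<in> bcarr ?T" "y \<in> bcarr ?T"
    then obtain xs ys where "pairs_in M C xs" "x = tclass M C xs" "pairs_in M C ys" "y = tclass M C ys" by (metis tensor_elemE)
    then show "badd ?T x y \<in> bcarr ?T" by (simp add: tensor_add_tclass tclass_in_tensor)
  qed
  have as: "\<forall>x\<in>bcarr ?T. \<forall>y\<in>bcarr ?T. \<forall>z\<in>bcarr ?T. badd ?T (badd ?T x y) z = badd ?T x (badd ?T y z)"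
  proof (intro ballI)
    fix x y z assume "x \<in> bcarr ?T" "y \<in> bcarr ?T" "z \<in> bcarr ?T"
    then obtain xs ys zs where "pairs_in M C xs" "x = tclass M C xs" "pairs_in M C ys" "y = tclass M C ys" "pairs_in M C zs" "z = tclass M C zs" by (metis tensor_elemE)
    then show "badd ?T (badd ?T x y) z = badd ?T x (badd ?T y z)" by (simp add: tensor_add_tclass)
  qed
  have co: "\<forall>x\<in>bcarr ?T. \<forall>y\<in>bcarr ?T. badd ?T x y = badd ?T y x"
  proof (intro ballI)
    fix x y assume "x \<in> bcarr ?T" "y \<in> bcarr ?T"
    then obtain xs ys where "pairs_in M C xs" "x = tclass M C xs" "pairs_in M C ys" "y = tclass M C ys" by (metis tensor_elemE)
    then show "badd ?T x y = badd ?T y x" by (simp add: tensor_add_tclass tclass_eq tequiv_mset add.commute)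
  qed
  have zl: "\<forall>x\<in>bcarr ?T. badd ?T (bzero ?T) x = x"
  proof (intro ballI)
    fix x assume "x \<in> bcarr ?T"
    then obtain xs where "pairs_in M C xs" "x = tclass M C xs" by (metis tensor_elemE)
    then show "badd ?T (bzero ?T) x = x" using tensor_add_tclass[where xs="[]" and ys=xs] by (simp add: tensor_zero_tclass)
  qed
  have inv: "\<forall>x\<in>bcarr ?T. \<exists>y\<in>bcarr ?T. badd ?T x y = bzero ?T"
  proof (intro ballI)
    fix x assume "x \<in> bcarr ?T"
    then obtain xs where xs: "pairs_in M C xs" "x = tclass M C xs" by (metis tensor_elemE)
    have l: "pairs_in M C (ract_pairs C (-1) xs)" using pairs_in_ract[OF C xs(1)] .
    have "badd ?T x (tclass M C (ract_pairs C (-1) xs)) = bzero ?T"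
      using xs l by (simp add: tensor_add_tclass tensor_zero_tclass tclass_eq tequiv_neg_list[OF C])
    then show "\<exists>y\<in>bcarr ?T. badd ?T x y = bzero ?T" using l tclass_in_tensor by blast
  qed
  show ?thesis unfolding abgroup_def using z cl as co zl inv by blast
qed

lemma tensor_right_module: assumes C: "bimodule C" shows "right_module (tensor M C)"
proof -
  let ?T = "tensor M C"
  have r1: "\<forall>x\<in>bcarr ?T. \<forall>a. bract ?T x a \<in> bcarr ?T"
    by (metis tensor_elemE tensor_ract_tclass[OF C] pairs_in_ract[OF C] tclass_in_tensor)
  have r2: "\<forall>x\<in>bcarr ?T. \<forall>y\<in>bcarr ?T. \<forall>a. bract ?T (badd ?T x y) a = badd ?T (bract ?T x a) (bract ?T y a)"
  proof (intro ballI allI)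
    fix x y a assume "x \<in> bcarr ?T" "y \<in> bcarr ?T"
    then obtain xs ys where "pairs_in M C xs" "x = tclass M C xs" "pairs_in M C ys" "y = tclass M C ys" by (metis tensor_elemE)
    then show "bract ?T (badd ?T x y) a = badd ?T (bract ?T x a) (bract ?T y a)"
      by (simp add: tensor_add_tclass tensor_ract_tclass[OF C] pairs_in_ract[OF C])
  qed
  have r3: "\<forall>x\<in>bcarr ?T. \<forall>a b. bract ?T x (a + b) = badd ?T (bract ?T x a) (bract ?T x b)"
  proof (intro ballI allI)
    fix x a b assume "x \<in> bcarr ?T"
    then obtain xs where "pairs_in M C xs" "x = tclass M C xs" by (metis tensor_elemE)
    then show "bract ?T x (a + b) = badd ?T (bract ?T x a) (bract ?T x b)"
      by (simp add: tensor_add_tclass tensor_ract_tclass[OF C] pairs_in_ract[OF C] tclass_eq tequiv_ract_sum[OF C])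
  qed
  have r4: "\<forall>x\<in>bcarr ?T. \<forall>a b. bract ?T x (a * b) = bract ?T (bract ?T x a) b"
  proof (intro ballI allI)
    fix x a b assume "x \<in> bcarr ?T"
    then obtain xs where xs: "pairs_in M C xs" "x = tclass M C xs" by (metis tensor_elemE)
    have "ract_pairs C (a*b) xs = ract_pairs C b (ract_pairs C a xs)" unfolding ract_pairs_def using xs(1) bm_rmul[OF C] by auto
    then show "bract ?T x (a * b) = bract ?T (bract ?T x a) b"
      using xs by (simp add: tensor_ract_tclass[OF C] pairs_in_ract[OF C])
  qed
  have r5: "\<forall>x\<in>bcarr ?T. bract ?T x 1 = x"
  proof (intro ballI allI)
    fix x assume "x \<in> bcarr ?T"
    then obtain xs where xs: "pairs_in M C xs" "x = tclass M C xs" by (metis tensor_elemE)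
    have "ract_pairs C 1 xs = xs" unfolding ract_pairs_def using xs(1) bm_rone[OF C] by (induction xs) auto
    then show "bract ?T x 1 = x" using xs by (simp add: tensor_ract_tclass[OF C])
  qed
  show ?thesis unfolding right_module_def using tensor_abgroup[OF C] r1 r2 r3 r4 r5 by blast
qed

lemma lsum_tclass_concat: "(\<And>x y. (x,y) \<in> set xs \<Longrightarrow> pairs_in M C (g x y)) \<Longrightarrow>
   lsum (tensor M C) (\<lambda>x y. tclass M C (g x y)) xs = tclass M C (concat (map (case_prod g) xs))"
proof (induction xs)
  case Nil then show ?case by (simp add: tensor_zero_tclass)
next
  case (Cons p xs)
  obtain x y where p: "p = (x,y)" by force
  have "pairs_in M C (concat (map (case_prod g) xs))" using Cons.prems by fastforce
  then show ?case using Cons p by (simp add: tensor_add_tclass)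
qed

lemma lsum_simple_tensors: "(\<And>x y. (x,y) \<in> set xs \<Longrightarrow> f x y \<in> bcarr M \<and> g x y \<in> bcarr C) \<Longrightarrow>
   lsum (tensor M C) (\<lambda>x y. tclass M C [(f x y, g x y)]) xs = tclass M C (map (\<lambda>(x,y). (f x y, g x y)) xs)"
proof -
  assume a: "\<And>x y. (x,y) \<in> set xs \<Longrightarrow> f x y \<in> bcarr M \<and> g x y \<in> bcarr C"
  have "lsum (tensor M C) (\<lambda>x y. tclass M C [(f x y, g x y)]) xs = tclass M C (concat (map (case_prod (\<lambda>x y. [(f x y, g x y)])) xs))"
    by (rule lsum_tclass_concat) (use a in auto)
  also have "concat (map (case_prod (\<lambda>x y. [(f x y, g x y)])) xs) = map (\<lambda>(x,y). (f x y, g x y)) xs"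
    by (induction xs) auto
  finally show ?thesis .
qed

lemma simple_add_left: "m \<in> bcarr M \<Longrightarrow> m' \<in> bcarr M \<Longrightarrow> c \<in> bcarr C \<Longrightarrow>
  tclass M C [(badd M m m', c)] = badd (tensor M C) (tclass M C [(m,c)]) (tclass M C [(m',c)])"
  by (simp add: tensor_add_tclass tclass_eq tequiv_elem_rel er_addl)
lemma simple_add_right: "m \<in> bcarr M \<Longrightarrow> c \<in> bcarr C \<Longrightarrow> c' \<in> bcarr C \<Longrightarrow>
  tclass M C [(m, badd C c c')] = badd (tensor M C) (tclass M C [(m,c)]) (tclass M C [(m,c')])"
  by (simp add: tensor_add_tclass tclass_eq tequiv_elem_rel er_addr)
lemma simple_balanced: "m \<in> bcarr M \<Longrightarrow> c \<in> bcarr C \<Longrightarrow>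
  tclass M C [(bract M m a, c)] = tclass M C [(m, blact C a c)]"
  by (simp add: tclass_eq tequiv_elem_rel er_bal)

lemma tequiv_lsum_right: assumes C: "bimodule C" and m: "m \<in> bcarr M"
  shows "(\<And>x y. (x,y) \<in> set xs \<Longrightarrow> f x y \<in> bcarr C) \<Longrightarrow>
    tequiv M C [(m, lsum C f xs)] (map (\<lambda>(x,y). (m, f x y)) xs)"
proof (induction xs)
  case Nil
  have X: "abgroup C" using bm_ag[OF C] .
  have z: "bzero C \<in> bcarr C" using ag_zero[OF X] .
  have "elem_rel M C [(m, badd C (bzero C) (bzero C))] [(m, bzero C),(m, bzero C)]" by (rule er_addr) (use m z in auto)
  then have doubled: "elem_rel M C [(m, bzero C),(m, bzero C)] [(m, bzero C)]" using ag_zl[OF X z] er_swap by fastforce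
  show ?case unfolding tequiv_iff_elem_rel
    by (intro exI[of _ "[(m, bzero C),(m, bzero C)]"] exI[of _ "[(m, bzero C)]"]) (simp add: doubled)
next
  case (Cons p xs)
  obtain x y where p: "p = (x,y)" by force
  have fx: "f x y \<in> bcarr C" using Cons.prems p by auto
  have v: "values_in C f xs" using Cons.prems unfolding values_in_def by fastforce
  have sc: "lsum C f xs \<in> bcarr C" using lsum_closed[OF bm_ag[OF C] v] .
  have "elem_rel M C [(m, badd C (f x y) (lsum C f xs))] [(m, f x y), (m, lsum C f xs)]" by (rule er_addr) (use m fx sc in auto)
  then have "tequiv M C [(m, badd C (f x y) (lsum C f xs))] ([(m, f x y)] @ [(m, lsum C f xs)])" by (simp add: tequiv_elem_rel)
  also have "tequiv M C ([(m, f x y)] @ [(m, lsum C f xs)]) ([(m, f x y)] @ map (\<lambda>(x,y). (m, f x y)) xs)"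
    by (rule tequiv_app[OF tequiv_refl Cons.IH]) (use Cons.prems in auto)
  finally show ?case using p by simp
qed

lemma tlift_add: assumes X: "abgroup X" and B: "balanced M C X \<beta>" and Y: "Y \<in> bcarr (tensor M C)" "Y' \<in> bcarr (tensor M C)"
  shows "tlift M C X \<beta> (badd (tensor M C) Y Y') = badd X (tlift M C X \<beta> Y) (tlift M C X \<beta> Y')"
proof -
  obtain ys ys' where y: "pairs_in M C ys" "Y = tclass M C ys" "pairs_in M C ys'" "Y' = tclass M C ys'" using Y by (metis tensor_elemE)
  have vl: "\<And>zs. pairs_in M C zs \<Longrightarrow> values_in X \<beta> zs" using B unfolding balanced_def values_in_def by fast
  show ?thesis using y vl X by (simp add: tensor_add_tclass tlift_tclass[OF X B] lsum_append)
qed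

lemma tlift_ract: assumes X: "abgroup X" and B: "balanced M C X \<beta>" and C: "bimodule C" and Y: "Y \<in> bcarr (tensor M C)"
  shows "tlift M C X \<beta> (bract (tensor M C) Y a) = tlift M C X (\<lambda>x y. \<beta> x (bract C y a)) Y"
proof -
  have y: "pairs_in M C (trep Y)" "Y = tclass M C (trep Y)" using trep_in_class[OF Y] by auto
  have "tlift M C X \<beta> (bract (tensor M C) Y a) = tlift M C X \<beta> (tclass M C (ract_pairs C a (trep Y)))"
    using tensor_ract_tclass[OF C y(1)] y(2) by metis
  also have "\<dots> = lsum X \<beta> (ract_pairs C a (trep Y))" using tlift_tclass[OF X B pairs_in_ract[OF C y(1)]] .
  also have "\<dots> = tlift M C X (\<lambda>x y. \<beta> x (bract C y a)) Y" by (simp add: lsum_ract_pairs tlift_eq_lsum)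
  finally show ?thesis .
qed

lemma tlift_closed: assumes X: "abgroup X" and B: "balanced M C X \<beta>" and Y: "Y \<in> bcarr (tensor M C)"
  shows "tlift M C X \<beta> Y \<in> bcarr X"
proof -
  have vl: "\<And>zs. pairs_in M C zs \<Longrightarrow> values_in X \<beta> zs" using B unfolding balanced_def values_in_def by fast
  show ?thesis unfolding tlift_eq_lsum using lsum_closed[OF X vl[OF trep_in_class(1)[OF Y]]] .
qed

section \<open>The map \<open>r\<^sub>N\<close> is the identity\<close>

locale frobenius_setting =
  fixes C :: "('a::ring_1, 'c, 'z) bimod_scheme" and \<Delta> :: "'c \<Rightarrow> ('c \<times> 'c) list set"
    and \<epsilon> :: "'c \<Rightarrow> 'a" and \<delta> :: "('c \<times> 'c) list set \<Rightarrow> 'a" and e :: 'c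
    and N :: "('a, 'n, 'w) bimod_scheme"
  assumes frob_cosep: "frobenius_coseparable C \<Delta> \<epsilon> \<delta> e" and N_right_module: "right_module N"
begin

abbreviation "T \<equiv> tensor N C"
abbreviation "T2 \<equiv> tensor T C"
abbreviation "C2 \<equiv> tensor C C"
abbreviation "\<rho>T \<equiv> coact_free N C \<Delta>"

lemma C_bimodule: "bimodule C" using frob_cosep unfolding frobenius_coseparable_def coseparable_def coring_def by blast

lemma Delta_closed: "c \<in> bcarr C \<Longrightarrow> \<Delta> c \<in> bcarr C2"
  using frob_cosep by (auto simp: frobenius_coseparable_def coseparable_def coring_def bilin_def rlin_def)

lemma Delta_ract: "c \<in> bcarr C \<Longrightarrow> \<Delta> (bract C c a) = bract C2 (\<Delta> c) a"
  using frob_cosep by (auto simp: frobenius_coseparable_def coseparable_def coring_def bilin_def rlin_def)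

lemma Delta_lact: "c \<in> bcarr C \<Longrightarrow> \<Delta> (blact C a c) = blact C2 a (\<Delta> c)"
  using frob_cosep by (auto simp: frobenius_coseparable_def coseparable_def coring_def bilin_def rlin_def)

lemma counit_left: "c \<in> bcarr C \<Longrightarrow> tlift C C C (\<lambda>x y. blact C (\<epsilon> x) y) (\<Delta> c) = c"
  using frob_cosep by (auto simp: frobenius_coseparable_def coseparable_def coring_def bilin_def rlin_def)

lemma frobenius_left: "c \<in> bcarr C \<Longrightarrow> \<delta> (tens C C e c) = \<epsilon> c"
  using frob_cosep by (auto simp: frobenius_coseparable_def coseparable_def coring_def bilin_def rlin_def)

lemma Delta_add: "c \<in> bcarr C \<Longrightarrow> c' \<in> bcarr C \<Longrightarrow> \<Delta> (badd C c c') = badd C2 (\<Delta> c) (\<Delta> c')"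
  using frob_cosep by (auto simp: frobenius_coseparable_def coseparable_def coring_def bilin_def rlin_def)

lemma delta_lact: "X \<in> bcarr C2 \<Longrightarrow> \<delta> (blact C2 a X) = a * \<delta> X"
  using frob_cosep unfolding frobenius_coseparable_def coseparable_def coring_def bilin_def rlin_def ring_bimod_def by auto

lemma delta_add: "X \<in> bcarr C2 \<Longrightarrow> Y \<in> bcarr C2 \<Longrightarrow> \<delta> (badd C2 X Y) = \<delta> X + \<delta> Y"
  using frob_cosep unfolding frobenius_coseparable_def coseparable_def coring_def bilin_def rlin_def ring_bimod_def by auto

lemma e_in_C: "e \<in> bcarr C" using frob_cosep unfolding frobenius_coseparable_def by blast

lemma coseparability: "c \<in> bcarr C \<Longrightarrow> d \<in> bcarr C \<Longrightarrow>
  tlift C C C (\<lambda>x y. bract C x (\<delta> (tens C C y d))) (\<Delta> c) = tlift C C C (\<lambda>x y. blact C (\<delta> (tens C C c x)) y) (\<Delta> d)"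
  using frob_cosep unfolding frobenius_coseparable_def coseparable_def by blast

lemma C_abgroup: "abgroup C" using bm_ag[OF C_bimodule] .
lemma C_add_closed: "x \<in> bcarr C \<Longrightarrow> y \<in> bcarr C \<Longrightarrow> badd C x y \<in> bcarr C" using ag_add[OF C_abgroup] .
lemma T_abgroup: "abgroup T" using tensor_abgroup[OF C_bimodule] .
lemma T_right_module: "right_module T" using tensor_right_module[OF C_bimodule] .
lemma T2_abgroup: "abgroup T2" using tensor_abgroup[OF C_bimodule] .
lemma T2_right_module: "right_module T2" using tensor_right_module[OF C_bimodule] .
lemma N_abgroup: "abgroup N" using rm_ag[OF N_right_module] .

lemma simple_in_T: "n \<in> bcarr N \<Longrightarrow> c \<in> bcarr C \<Longrightarrow> tclass N C [(n,c)] \<in> bcarr T" by (simp add: tclass_in_tensor)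
lemma simple_in_C2: "x \<in> bcarr C \<Longrightarrow> c \<in> bcarr C \<Longrightarrow> tclass C C [(x,c)] \<in> bcarr C2" by (simp add: tclass_in_tensor)

text \<open>The ingredients of \<open>\<nu>\<^sub>T\<close> and of the coaction \<open>\<rho>\<^sub>T = N \<otimes>\<^sub>A \<Delta>\<close> on \<open>T\<close>:
  \<open>\<kappa> n c\<^sub>1 c\<^sub>2 = (n \<otimes> c\<^sub>1) \<otimes> c\<^sub>2\<close>, \<open>\<gamma> n c = \<Sum> (n \<otimes> c(1)) \<otimes> c(2)\<close>,
  \<open>\<psi> c t x = t \<cdot> \<delta>(x \<otimes> c)\<close> and \<open>\<beta> t c = \<Sum> t(0) \<delta>(t(1) \<otimes> c)\<close>, so that \<open>\<nu>\<^sub>T\<close> is induced by \<open>\<beta>\<close>.\<close>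

definition \<kappa> :: "'n \<Rightarrow> 'c \<Rightarrow> 'c \<Rightarrow> (('n \<times> 'c) list set \<times> 'c) list set" where "\<kappa> n c1 c2 = tens T C (tens N C n c1) c2"
definition \<gamma> :: "'n \<Rightarrow> 'c \<Rightarrow> (('n \<times> 'c) list set \<times> 'c) list set" where "\<gamma> n c = tlift C C T2 (\<kappa> n) (\<Delta> c)"
definition \<psi> :: "'c \<Rightarrow> ('n \<times> 'c) list set \<Rightarrow> 'c \<Rightarrow> ('n \<times> 'c) list set" where "\<psi> c m0 m1 = bract T m0 (\<delta> (tens C C m1 c))"
definition \<beta> :: "('n \<times> 'c) list set \<Rightarrow> 'c \<Rightarrow> ('n \<times> 'c) list set" where "\<beta> m c = tlift T C T (\<psi> c) (\<rho>T m)"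

lemma coact_free_eq_tlift: "\<rho>T = tlift N C T2 \<gamma>"
  unfolding coact_free_def \<gamma>_def \<kappa>_def by simp

lemma kappa_balanced: assumes n: "n \<in> bcarr N" shows "balanced C C T2 (\<kappa> n)"
proof -
  have closed: "\<forall>c1\<in>bcarr C. \<forall>c2\<in>bcarr C. \<kappa> n c1 c2 \<in> bcarr T2"
    using n by (simp add: \<kappa>_def tens_def tclass_in_tensor)
  have add_left: "\<forall>c1\<in>bcarr C. \<forall>c1'\<in>bcarr C. \<forall>c2\<in>bcarr C. \<kappa> n (badd C c1 c1') c2 = badd T2 (\<kappa> n c1 c2) (\<kappa> n c1' c2)"
    using n by (simp add: \<kappa>_def tens_def simple_add_right simple_add_left simple_in_T)
  have add_right: "\<forall>c1\<in>bcarr C. \<forall>c2\<in>bcarr C. \<forall>c2'\<in>bcarr C. \<kappa> n c1 (badd C c2 c2') = badd T2 (\<kappa> n c1 c2) (\<kappa> n c1 c2')"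
    using n by (simp add: \<kappa>_def tens_def simple_add_right simple_in_T)
  have act_balanced: "\<forall>c1\<in>bcarr C. \<forall>c2\<in>bcarr C. \<forall>a. \<kappa> n (bract C c1 a) c2 = \<kappa> n c1 (blact C a c2)"
  proof (intro ballI allI)
    fix c1 c2 a assume c: "c1 \<in> bcarr C" "c2 \<in> bcarr C"
    have "tclass N C [(n, bract C c1 a)] = bract T (tclass N C [(n, c1)]) a" using tensor_ract_tclass[OF C_bimodule, of "[(n,c1)]" N a] n c by simp
    then show "\<kappa> n (bract C c1 a) c2 = \<kappa> n c1 (blact C a c2)" using n c by (simp add: \<kappa>_def tens_def simple_balanced simple_in_T)
  qed
  show ?thesis unfolding balanced_def using closed add_left add_right act_balanced C_add_closed bm_rcl[OF C_bimodule] bm_lcl[OF C_bimodule] by blast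
qed

text \<open>\<open>\<kappa>\<close> and \<open>\<gamma>\<close> are additive in \<open>n\<close>; \<open>\<gamma>\<close> inherits balancedness from \<open>\<Delta>\<close> being a bimodule map.\<close>

lemma kappa_add_left: "n \<in> bcarr N \<Longrightarrow> n' \<in> bcarr N \<Longrightarrow> c1 \<in> bcarr C \<Longrightarrow> c2 \<in> bcarr C \<Longrightarrow>
   \<kappa> (badd N n n') c1 c2 = badd T2 (\<kappa> n c1 c2) (\<kappa> n' c1 c2)"
  by (simp add: \<kappa>_def tens_def simple_add_left simple_in_T)

lemma kappa_closed: "n \<in> bcarr N \<Longrightarrow> c1 \<in> bcarr C \<Longrightarrow> c2 \<in> bcarr C \<Longrightarrow> \<kappa> n c1 c2 \<in> bcarr T2"
  by (simp add: \<kappa>_def tens_def tclass_in_tensor)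

lemma gamma_balanced: "balanced N C T2 \<gamma>"
proof -
  have closed: "\<forall>n\<in>bcarr N. \<forall>c\<in>bcarr C. \<gamma> n c \<in> bcarr T2"
    unfolding \<gamma>_def using tlift_closed[OF T2_abgroup kappa_balanced Delta_closed] by blast
  have add_left: "\<forall>n\<in>bcarr N. \<forall>n'\<in>bcarr N. \<forall>c\<in>bcarr C. \<gamma> (badd N n n') c = badd T2 (\<gamma> n c) (\<gamma> n' c)"
  proof (intro ballI)
    fix n n' c assume a: "n \<in> bcarr N" "n' \<in> bcarr N" "c \<in> bcarr C"
    have ds: "pairs_in C C (trep (\<Delta> c))" using trep_in_class(1)[OF Delta_closed[OF a(3)]] .
    have "\<gamma> (badd N n n') c = lsum T2 (\<lambda>x y. badd T2 (\<kappa> n x y) (\<kappa> n' x y)) (trep (\<Delta> c))"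
      unfolding \<gamma>_def tlift_eq_lsum by (rule lsum_cong) (use ds a kappa_add_left in auto)
    also have "\<dots> = badd T2 (\<gamma> n c) (\<gamma> n' c)"
      unfolding \<gamma>_def tlift_eq_lsum by (rule lsum_add[OF T2_abgroup]) (use ds a kappa_closed in auto)
    finally show "\<gamma> (badd N n n') c = badd T2 (\<gamma> n c) (\<gamma> n' c)" .
  qed
  have add_right: "\<forall>n\<in>bcarr N. \<forall>c\<in>bcarr C. \<forall>c'\<in>bcarr C. \<gamma> n (badd C c c') = badd T2 (\<gamma> n c) (\<gamma> n c')"
    unfolding \<gamma>_def using Delta_add tlift_add[OF T2_abgroup kappa_balanced Delta_closed Delta_closed] by simp
  have act_balanced: "\<forall>n\<in>bcarr N. \<forall>c\<in>bcarr C. \<forall>a. \<gamma> (bract N n a) c = \<gamma> n (blact C a c)"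
  proof (intro ballI allI)
    fix n c a assume a: "n \<in> bcarr N" "c \<in> bcarr C"
    have ds: "pairs_in C C (trep (\<Delta> c))" "\<Delta> c = tclass C C (trep (\<Delta> c))" using trep_in_class[OF Delta_closed[OF a(2)]] by auto
    have "\<gamma> n (blact C a c) = tlift C C T2 (\<kappa> n) (tclass C C (lact_pairs C a (trep (\<Delta> c))))"
      unfolding \<gamma>_def using Delta_lact[OF a(2)] tensor_lact_tclass[OF C_bimodule ds(1)] ds(2) by metis
    also have "\<dots> = lsum T2 (\<lambda>x y. \<kappa> n (blact C a x) y) (trep (\<Delta> c))"
      using tlift_tclass[OF T2_abgroup kappa_balanced[OF a(1)] pairs_in_lact[OF C_bimodule ds(1)]] by (simp add: lsum_lact_pairs)
    also have "\<dots> = \<gamma> (bract N n a) c"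
      unfolding \<gamma>_def tlift_eq_lsum by (rule lsum_cong) (use ds a in \<open>auto simp: \<kappa>_def tens_def simple_balanced\<close>)
    finally show "\<gamma> (bract N n a) c = \<gamma> n (blact C a c)" by simp
  qed
  show ?thesis unfolding balanced_def
    by (intro conjI closed add_left add_right act_balanced ballI allI ag_add[OF N_abgroup] rm_rcl[OF N_right_module] C_add_closed bm_lcl[OF C_bimodule]; assumption)
qed

text \<open>\<open>\<psi> c\<close> is balanced because \<open>\<delta>\<close> is left \<open>A\<close>-linear and additive.\<close>

lemma psi_closed: "m0 \<in> bcarr T \<Longrightarrow> \<psi> c m0 m1 \<in> bcarr T"
  unfolding \<psi>_def using rm_rcl[OF T_right_module] .

lemma psi_add_index: "m0 \<in> bcarr T \<Longrightarrow> m1 \<in> bcarr C \<Longrightarrow> c \<in> bcarr C \<Longrightarrow> c' \<in> bcarr C \<Longrightarrow>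
  \<psi> (badd C c c') m0 m1 = badd T (\<psi> c m0 m1) (\<psi> c' m0 m1)"
  unfolding \<psi>_def by (simp add: tens_def simple_add_right delta_add simple_in_C2 rm_rsum[OF T_right_module])

lemma psi_balanced: assumes c: "c \<in> bcarr C" shows "balanced T C T (\<psi> c)"
proof -
  have closed: "\<forall>m\<in>bcarr T. \<forall>x\<in>bcarr C. \<psi> c m x \<in> bcarr T" using psi_closed by blast
  have add_left: "\<forall>m\<in>bcarr T. \<forall>m'\<in>bcarr T. \<forall>x\<in>bcarr C. \<psi> c (badd T m m') x = badd T (\<psi> c m x) (\<psi> c m' x)"
    unfolding \<psi>_def using rm_radd[OF T_right_module] by blast
  have add_right: "\<forall>m\<in>bcarr T. \<forall>x\<in>bcarr C. \<forall>x'\<in>bcarr C. \<psi> c m (badd C x x') = badd T (\<psi> c m x) (\<psi> c m x')"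
    unfolding \<psi>_def using c by (simp add: tens_def simple_add_left delta_add simple_in_C2 rm_rsum[OF T_right_module])
  have act_balanced: "\<forall>m\<in>bcarr T. \<forall>x\<in>bcarr C. \<forall>a. \<psi> c (bract T m a) x = \<psi> c m (blact C a x)"
  proof (intro ballI allI)
    fix m x a assume a: "m \<in> bcarr T" "x \<in> bcarr C"
    have "tclass C C [(blact C a x, c)] = blact C2 a (tclass C C [(x,c)])"
      using tensor_lact_tclass[OF C_bimodule, of "[(x,c)]" C a] a c by simp
    then show "\<psi> c (bract T m a) x = \<psi> c m (blact C a x)"
      unfolding \<psi>_def using a c by (simp add: tens_def delta_lact simple_in_C2 rm_rmul[OF T_right_module])
  qed
  show ?thesis unfolding balanced_def
    by (intro conjI closed add_left add_right act_balanced ballI allI ag_add[OF T_abgroup] rm_rcl[OF T_right_module] C_add_closed bm_lcl[OF C_bimodule]; assumption)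
qed

text \<open>The coaction \<open>\<rho>\<^sub>T\<close> is a right-linear map \<open>T \<rightarrow> T \<otimes>\<^sub>A C\<close>, which makes \<open>\<beta>\<close> balanced.\<close>

lemma coact_closed: "m \<in> bcarr T \<Longrightarrow> \<rho>T m \<in> bcarr T2"
  unfolding coact_free_eq_tlift using tlift_closed[OF T2_abgroup gamma_balanced] .

lemma coact_add: "m \<in> bcarr T \<Longrightarrow> m' \<in> bcarr T \<Longrightarrow> \<rho>T (badd T m m') = badd T2 (\<rho>T m) (\<rho>T m')"
  unfolding coact_free_eq_tlift using tlift_add[OF T2_abgroup gamma_balanced] .

lemma gamma_ract: assumes n: "n \<in> bcarr N" and y: "y \<in> bcarr C" shows "\<gamma> n (bract C y a) = bract T2 (\<gamma> n y) a"
proof -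
  have ds: "pairs_in C C (trep (\<Delta> y))" using trep_in_class(1)[OF Delta_closed[OF y]] .
  have "\<gamma> n (bract C y a) = tlift C C T2 (\<lambda>c1 c2. \<kappa> n c1 (bract C c2 a)) (\<Delta> y)"
    unfolding \<gamma>_def using Delta_ract[OF y] tlift_ract[OF T2_abgroup kappa_balanced[OF n] C_bimodule Delta_closed[OF y]] by simp
  also have "\<dots> = lsum T2 (\<lambda>c1 c2. bract T2 (\<kappa> n c1 c2) a) (trep (\<Delta> y))"
    unfolding tlift_eq_lsum by (rule lsum_cong) (use ds n in \<open>auto simp: \<kappa>_def tens_def tensor_ract_tclass[OF C_bimodule] simple_in_T\<close>)
  also have "\<dots> = bract T2 (\<gamma> n y) a"
    unfolding \<gamma>_def tlift_eq_lsum by (rule lsum_ract[OF T2_right_module]) (use ds n kappa_closed in \<open>auto simp: values_in_def\<close>)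
  finally show ?thesis .
qed

lemma coact_ract: assumes m: "m \<in> bcarr T" shows "\<rho>T (bract T m a) = bract T2 (\<rho>T m) a"
proof -
  have ds: "pairs_in N C (trep m)" using trep_in_class(1)[OF m] .
  have "\<rho>T (bract T m a) = tlift N C T2 (\<lambda>x y. \<gamma> x (bract C y a)) m"
    unfolding coact_free_eq_tlift using tlift_ract[OF T2_abgroup gamma_balanced C_bimodule m] .
  also have "\<dots> = lsum T2 (\<lambda>x y. bract T2 (\<gamma> x y) a) (trep m)"
    unfolding tlift_eq_lsum by (rule lsum_cong) (use ds gamma_ract in auto)
  also have "\<dots> = bract T2 (\<rho>T m) a"
    unfolding coact_free_eq_tlift tlift_eq_lsum by (rule lsum_ract[OF T2_right_module]) (use ds gamma_balanced in \<open>auto simp: values_in_def balanced_def\<close>)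
  finally show ?thesis .
qed

lemma beta_balanced: "balanced T C T \<beta>"
proof -
  have closed: "\<forall>m\<in>bcarr T. \<forall>c\<in>bcarr C. \<beta> m c \<in> bcarr T"
    unfolding \<beta>_def using tlift_closed[OF T_abgroup psi_balanced coact_closed] by blast
  have add_left: "\<forall>m\<in>bcarr T. \<forall>m'\<in>bcarr T. \<forall>c\<in>bcarr C. \<beta> (badd T m m') c = badd T (\<beta> m c) (\<beta> m' c)"
    unfolding \<beta>_def using coact_add tlift_add[OF T_abgroup psi_balanced coact_closed coact_closed] by simp
  have add_right: "\<forall>m\<in>bcarr T. \<forall>c\<in>bcarr C. \<forall>c'\<in>bcarr C. \<beta> m (badd C c c') = badd T (\<beta> m c) (\<beta> m c')"
  proof (intro ballI)
    fix m c c' assume a: "m \<in> bcarr T" "c \<in> bcarr C" "c' \<in> bcarr C"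
    have ds: "pairs_in T C (trep (\<rho>T m))" using trep_in_class(1)[OF coact_closed[OF a(1)]] .
    have "\<beta> m (badd C c c') = lsum T (\<lambda>x y. badd T (\<psi> c x y) (\<psi> c' x y)) (trep (\<rho>T m))"
      unfolding \<beta>_def tlift_eq_lsum by (rule lsum_cong) (use ds a psi_add_index in auto)
    also have "\<dots> = badd T (\<beta> m c) (\<beta> m c')"
      unfolding \<beta>_def tlift_eq_lsum by (rule lsum_add[OF T_abgroup]) (use ds psi_closed in auto)
    finally show "\<beta> m (badd C c c') = badd T (\<beta> m c) (\<beta> m c')" .
  qed
  have act_balanced: "\<forall>m\<in>bcarr T. \<forall>c\<in>bcarr C. \<forall>a. \<beta> (bract T m a) c = \<beta> m (blact C a c)"
  proof (intro ballI allI)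
    fix m c a assume a: "m \<in> bcarr T" "c \<in> bcarr C"
    have ds: "pairs_in T C (trep (\<rho>T m))" using trep_in_class(1)[OF coact_closed[OF a(1)]] .
    have "\<beta> (bract T m a) c = tlift T C T (\<lambda>x y. \<psi> c x (bract C y a)) (\<rho>T m)"
      unfolding \<beta>_def using coact_ract[OF a(1)] tlift_ract[OF T_abgroup psi_balanced[OF a(2)] C_bimodule coact_closed[OF a(1)]] by simp
    also have "\<dots> = \<beta> m (blact C a c)"
      unfolding \<beta>_def tlift_eq_lsum by (rule lsum_cong) (use ds a in \<open>auto simp: \<psi>_def tens_def simple_balanced\<close>)
    finally show "\<beta> (bract T m a) c = \<beta> m (blact C a c)" .
  qed
  show ?thesis unfolding balanced_def
    by (intro conjI closed add_left add_right act_balanced ballI allI ag_add[OF T_abgroup] rm_rcl[OF T_right_module] C_add_closed bm_lcl[OF C_bimodule]; assumption)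
qed

lemma coact_simple_e: assumes n: "n \<in> bcarr N"
  shows "\<rho>T (tclass N C [(n,e)]) = tclass T C (map (\<lambda>(x,y). (tclass N C [(n,x)], y)) (trep (\<Delta> e)))"
proof -
  have es: "pairs_in C C (trep (\<Delta> e))" using trep_in_class(1)[OF Delta_closed[OF e_in_C]] .
  have "\<rho>T (tclass N C [(n,e)]) = lsum T2 \<gamma> [(n,e)]"
    unfolding coact_free_eq_tlift using tlift_tclass[OF T2_abgroup gamma_balanced] n e_in_C by simp
  also have "\<dots> = \<gamma> n e" using ag_zr[OF T2_abgroup] gamma_balanced n e_in_C unfolding balanced_def by simp
  also have "\<dots> = lsum T2 (\<lambda>x y. tclass T C [(tclass N C [(n,x)], y)]) (trep (\<Delta> e))"
    unfolding \<gamma>_def tlift_eq_lsum \<kappa>_def tens_def by simp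
  also have "\<dots> = tclass T C (map (\<lambda>(x,y). (tclass N C [(n,x)], y)) (trep (\<Delta> e)))"
    by (rule lsum_simple_tensors) (use es n simple_in_T in auto)
  finally show ?thesis .
qed

text \<open>The key computation: \<open>\<beta>(n \<otimes> e, c) = n \<otimes> \<Sum> e(1) \<delta>(e(2) \<otimes> c) = n \<otimes> \<Sum> \<delta>(e \<otimes> c(1)) c(2)
  = n \<otimes> \<Sum> \<epsilon>(c(1)) c(2) = n \<otimes> c\<close>, by the coseparability identity, the Frobenius property
  of \<open>e\<close> and the counit law.\<close>

lemma beta_simple_e: assumes n: "n \<in> bcarr N" and c: "c \<in> bcarr C"
  shows "\<beta> (tclass N C [(n,e)]) c = tclass N C [(n,c)]"
proof -
  let ?es = "trep (\<Delta> e)"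
  let ?F = "\<lambda>x y. bract C x (\<delta> (tens C C y c))"
  have es: "pairs_in C C ?es" using trep_in_class(1)[OF Delta_closed[OF e_in_C]] .
  have cs: "pairs_in C C (trep (\<Delta> c))" using trep_in_class(1)[OF Delta_closed[OF c]] .
  have L: "pairs_in T C (map (\<lambda>(x,y). (tclass N C [(n,x)], y)) ?es)" using es n simple_in_T by auto
  have "\<beta> (tclass N C [(n,e)]) c = lsum T (\<psi> c) (map (\<lambda>(x,y). (tclass N C [(n,x)], y)) ?es)"
    unfolding \<beta>_def coact_simple_e[OF n] using tlift_tclass[OF T_abgroup psi_balanced[OF c] L] .
  also have "\<dots> = lsum T (\<lambda>x y. \<psi> c (tclass N C [(n,x)]) y) ?es"
    using lsum_map[of T "\<psi> c" "\<lambda>x y. tclass N C [(n,x)]" "\<lambda>x y. y" ?es] by simp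
  also have "\<dots> = lsum T (\<lambda>x y. tclass N C [(n, ?F x y)]) ?es"
    by (rule lsum_cong) (use es n in \<open>auto simp: \<psi>_def tensor_ract_tclass[OF C_bimodule]\<close>)
  also have "\<dots> = tclass N C (map (\<lambda>(x,y). (n, ?F x y)) ?es)"
    by (rule lsum_simple_tensors) (use es n bm_rcl[OF C_bimodule] in auto)
  also have "\<dots> = tclass N C [(n, lsum C ?F ?es)]"
    by (rule tclass_eq, rule tequiv_sym, rule tequiv_lsum_right[OF C_bimodule n]) (use es bm_rcl[OF C_bimodule] in auto)
  also have "lsum C ?F ?es = c"
  proof -
    have "lsum C ?F ?es = tlift C C C (\<lambda>x y. blact C (\<delta> (tens C C e x)) y) (\<Delta> c)"
      using coseparability[OF e_in_C c] unfolding tlift_eq_lsum by simp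
    also have "\<dots> = tlift C C C (\<lambda>x y. blact C (\<epsilon> x) y) (\<Delta> c)"
      unfolding tlift_eq_lsum by (rule lsum_cong) (use cs frobenius_left in auto)
    also have "\<dots> = c" using counit_left[OF c] .
    finally show ?thesis .
  qed
  finally show ?thesis .
qed

lemma nu_eq_tlift_beta: "nu C \<delta> T \<rho>T = tlift T C T \<beta>"
  unfolding nu_def \<beta>_def \<psi>_def by simp

text \<open>Therefore \<open>r\<^sub>N(n \<otimes> c) = \<beta>(n \<otimes> e, c) = n \<otimes> c\<close>, i.e. \<open>r\<^sub>N\<close> is the identity of \<open>N \<otimes>\<^sub>A C\<close>.\<close>

lemma rmap_identity: assumes t: "t \<in> bcarr T" shows "rmap C \<Delta> \<delta> e N t = t"
proof -
  let ?rs = "trep t"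
  have rs: "pairs_in N C ?rs" "t = tclass N C ?rs" using trep_in_class[OF t] by auto
  let ?L = "map (\<lambda>(x,y). (tclass N C [(x,e)], y)) ?rs"
  have L: "pairs_in T C ?L" using rs e_in_C simple_in_T by auto
  have "map_tensor N C T (etabar C e N) t = lsum T2 (\<lambda>x y. tclass T C [(tclass N C [(x,e)], y)]) ?rs"
    unfolding map_tensor_def tlift_eq_lsum etabar_def tens_def by simp
  also have "\<dots> = tclass T C ?L"
    by (rule lsum_simple_tensors) (use rs e_in_C simple_in_T in auto)
  finally have mt: "map_tensor N C T (etabar C e N) t = tclass T C ?L" .
  have "rmap C \<Delta> \<delta> e N t = lsum T \<beta> ?L"
    unfolding rmap_def mt nu_eq_tlift_beta using tlift_tclass[OF T_abgroup beta_balanced L] .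
  also have "\<dots> = lsum T (\<lambda>x y. \<beta> (tclass N C [(x,e)]) y) ?rs"
    using lsum_map[of T \<beta> "\<lambda>x y. tclass N C [(x,e)]" "\<lambda>x y. y" ?rs] by simp
  also have "\<dots> = lsum T (\<lambda>x y. tclass N C [(x,y)]) ?rs"
    by (rule lsum_cong) (use rs beta_simple_e in auto)
  also have "\<dots> = tclass N C (map (\<lambda>(x,y). (x,y)) ?rs)"
    by (rule lsum_simple_tensors) (use rs in auto)
  also have "\<dots> = t" using rs(2) by simp
  finally show ?thesis .
qed

end

text \<open>Formal smoothness and cosmoothness only ask for a lift of every comodule map
  through \<open>r\<^sub>N\<close>; when \<open>r\<^sub>N\<close> fixes every element of \<open>N \<otimes>\<^sub>A C\<close>, the map itself is such a lift.\<close>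

lemma formally_smooth_if_rmap_fixes:
  assumes rmap_fixes: "\<And>t. t \<in> bcarr (tensor N C) \<Longrightarrow> rmap C \<Delta> \<delta> e N t = t"
  shows "formally_smooth_at C \<Delta> \<delta> e M \<rho> N"
  unfolding formally_smooth_at_def
proof (intro allI impI)
  fix g assume g: "comod_hom C M \<rho> (tensor N C) (coact_free N C \<Delta>) g"
  then have "\<forall>m\<in>bcarr M. rmap C \<Delta> \<delta> e N (g m) = g m"
    using rmap_fixes unfolding comod_hom_def rlin_def by auto
  with g show "\<exists>h. comod_hom C M \<rho> (tensor N C) (coact_free N C \<Delta>) h \<and>
      (\<forall>m\<in>bcarr M. rmap C \<Delta> \<delta> e N (h m) = g m)" by blast
qed

lemma formally_cosmooth_if_rmap_fixes:
  assumes rmap_fixes: "\<And>t. t \<in> bcarr (tensor N C) \<Longrightarrow> rmap C \<Delta> \<delta> e N t = t"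
  shows "formally_cosmooth_at C \<Delta> \<delta> e M \<rho> N"
  unfolding formally_cosmooth_at_def
proof (intro allI impI)
  fix g assume g: "comod_hom C (tensor N C) (coact_free N C \<Delta>) M \<rho> g"
  have "\<forall>t\<in>bcarr (tensor N C). g (rmap C \<Delta> \<delta> e N t) = g t"
    using rmap_fixes by simp
  with g show "\<exists>h. comod_hom C (tensor N C) (coact_free N C \<Delta>) M \<rho> h \<and>
      (\<forall>t\<in>bcarr (tensor N C). h (rmap C \<Delta> \<delta> e N t) = g t)" by blast
qed

theorem corollary4p8:
  fixes C :: "('a::ring_1, 'c) bimod"
    and \<Delta> :: "'c \<Rightarrow> ('c \<times> 'c) list set"
    and \<epsilon> :: "'c \<Rightarrow> 'a"
    and \<delta> :: "('c \<times> 'c) list set \<Rightarrow> 'a"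
    and e :: 'c
    and M :: "('a, 'm) bimod"
    and \<rho> :: "'m \<Rightarrow> ('m \<times> 'c) list set"
  assumes "frobenius_coseparable C \<Delta> \<epsilon> \<delta> e"
    and "comodule C \<Delta> \<epsilon> M \<rho>"
  shows "\<forall>N :: ('a, 'n) bimod. right_module N \<longrightarrow>
           formally_smooth_at C \<Delta> \<delta> e M \<rho> N \<and> formally_cosmooth_at C \<Delta> \<delta> e M \<rho> N"
proof (intro allI impI)
  fix N :: "('a, 'n) bimod"
  assume "right_module N"
  with assms(1) interpret frobenius_setting C \<Delta> \<epsilon> \<delta> e N by unfold_locales
  show "formally_smooth_at C \<Delta> \<delta> e M \<rho> N \<and> formally_cosmooth_at C \<Delta> \<delta> e M \<rho> N"
    using formally_smooth_if_rmap_fixes[OF rmap_identity] formally_cosmooth_if_rmap_fixes[OF rmap_identity]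
    by blast
qed

end
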